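(* There exist absolute constants $C, C'>0$ such that the following holds. Let $n,d\ge 1$, let $\alpha\in(0,1]$ and let $\eta\in\mathbb R^n$ be a deterministic vector with $|\{i\in[n]: |\eta_i|\le 1\}|\ge \alpha n$. Let $\mathbf X\in\mathbb R^{n\times d}$ have i.i.d. entries $\mathbf X_{ij}\sim N(0,1)$. Let $\delta\in(0,1)$ and suppose $n\ge C\cdot \frac{d+\ln(2/\delta)}{\alpha^2}$. Then with probability at least $1-\delta$ over $\mathbf X$, simultaneously for every $\beta^*\in\mathbb R^d$ the following holds: with $\mathbf y=\mathbf X\beta^*+\eta$, every minimizer $\hat\beta$ of the Huber loss $f(\beta)=\frac1n\sum_{i=1}^n\Phi\big((\mathbf X\beta-\mathbf y)_i\big)$ satisfies \[\|\beta^*-\hat\beta\|^2\le C'\cdot\frac{d+\ln(2/\delta)}{\alpha^2 n}.\]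
   Context: The Huber penalty $\Phi:\mathbb R\to\mathbb R_{\ge0}$ is $\Phi(t)=\tfrac12 t^2$ if $|t|\le 2$ and $\Phi(t)=2|t|-2$ otherwise. $\|\cdot\|$ is the Euclidean norm. *)

theory Defs
  imports "HOL-Probability.Probability"
begin

definition huber :: "real \<Rightarrow> real" where
  "huber t = (if \<bar>t\<bar> \<le> 2 then t\<^sup>2 / 2 else 2 * \<bar>t\<bar> - 2)"

definition gauss_matrix :: "nat \<Rightarrow> nat \<Rightarrow> (nat \<times> nat \<Rightarrow> real) measure" where
  "gauss_matrix n d = PiM ({..<n} \<times> {..<d}) (\<lambda>_. density lborel std_normal_density)"

text \<open>Huber loss f(beta) = (1/n) sum_i Phi((X beta - y)_i); vectors in R^d are
  functions nat => real of which only the components j < d are used.\<close>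
definition huber_loss :: "nat \<Rightarrow> nat \<Rightarrow> (nat \<times> nat \<Rightarrow> real) \<Rightarrow> (nat \<Rightarrow> real) \<Rightarrow> (nat \<Rightarrow> real) \<Rightarrow> real" where
  "huber_loss n d X y \<beta> = (1 / real n) * (\<Sum>i<n. huber ((\<Sum>j<d. X (i, j) * \<beta> j) - y i))"

end

theory Submission
  imports Defs
begin

text \<open>Write \<open>\<Delta> = \<beta>h - \<beta>s\<close>; by convexity of the Huber loss it suffices to show that
  every \<open>D\<close> of norm \<open>r\<close> strictly increases the loss over \<open>D = 0\<close>. The increment splits into a
  linear term, controlled by the norm of the gradient \<open>X\<^sup>T\<psi>(-\<eta>)\<close>, which is
  \<open>O(\<surd>(n (d + log(1/\<delta>))))\<close>, and a quadratic term coming from the inlier rows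
  \<open>|\<eta>\<^sub>i| \<le> 1\<close> where \<open>|(X D)\<^sub>i|\<close> is neither tiny nor large: there the Huber penalty is exactly
  quadratic. A constant fraction of the inlier rows qualifies, because every direction \<open>u\<close> has
  \<open>|(X u)\<^sub>i| \<ge> 1/40\<close> on many rows (Gaussian anti-concentration and a Chernoff bound), while
  the operator norm of \<open>X\<close> on the inlier rows is \<open>O(\<surd>m)\<close>. All three random statements hold
  simultaneously for all directions by a union bound over finite grid nets.\<close>

section \<open>Gaussian vectors and matrices\<close>

abbreviation std_gaussian :: "'a set \<Rightarrow> ('a \<Rightarrow> real) measure" where
  "std_gaussian K \<equiv> PiM K (\<lambda>_. std_normal_distribution)"

abbreviation matvec :: "nat set \<Rightarrow> (nat \<times> nat \<Rightarrow> real) \<Rightarrow> (nat \<Rightarrow> real) \<Rightarrow> nat \<Rightarrow> real" where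
  "matvec J X v i \<equiv> \<Sum>j\<in>J. X (i, j) * v j"

lemma prob_space_std_normal_distribution: "prob_space std_normal_distribution"
  using prob_space_normal_density[of 1 0] by simp

lemma product_prob_space_std_normal: "product_prob_space (\<lambda>_. std_normal_distribution)"
  by (simp add: product_prob_space_def product_prob_space_axioms_def product_sigma_finite_def
      prob_space_std_normal_distribution prob_space_imp_sigma_finite)

lemma prob_space_std_gaussian: "prob_space (std_gaussian K)"
proof -
  interpret product_prob_space "\<lambda>_. std_normal_distribution" K
    by (rule product_prob_space_std_normal)
  show ?thesis by (rule P.prob_space_axioms)
qed

lemma std_normal_density_mult_exp:
  "std_normal_density x * exp (a * x) = exp (a\<^sup>2 / 2) * normal_density a 1 x"
  unfolding normal_density_def
  by (simp add: exp_add[symmetric] power2_eq_square algebra_simps diff_divide_distrib add_divide_distrib)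

lemma std_normal_exp_moment:
  shows "integrable std_normal_distribution (\<lambda>x. exp (a * x))"
    and "(\<integral>x. exp (a * x) \<partial>std_normal_distribution) = exp (a\<^sup>2 / 2)"
  by (subst integrable_density integral_density; auto simp: std_normal_density_mult_exp)+

lemma std_gaussian_exp_linear_moment:
  assumes fin: "finite K"
  shows "integrable (std_gaussian K) (\<lambda>x. exp (l * (\<Sum>k\<in>K. c k * x k)))"
    and "(\<integral>x. exp (l * (\<Sum>k\<in>K. c k * x k)) \<partial>std_gaussian K) = exp (l\<^sup>2 * (\<Sum>k\<in>K. (c k)\<^sup>2) / 2)"
proof -
  interpret product_prob_space "\<lambda>_. std_normal_distribution" K
    by (rule product_prob_space_std_normal)
  have prod: "(\<lambda>x. exp (l * (\<Sum>k\<in>K. c k * x k))) = (\<lambda>x. \<Prod>k\<in>K. exp ((l * c k) * x k))"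
    by (auto simp: sum_distrib_left exp_sum[OF fin] mult.assoc)
  show "integrable (std_gaussian K) (\<lambda>x. exp (l * (\<Sum>k\<in>K. c k * x k)))"
    unfolding prod by (rule product_integrable_prod[OF fin]) (rule std_normal_exp_moment)
  have "(\<integral>x. exp (l * (\<Sum>k\<in>K. c k * x k)) \<partial>std_gaussian K) = (\<Prod>k\<in>K. exp ((l * c k)\<^sup>2 / 2))"
    unfolding prod by (subst product_integral_prod[OF fin]) (auto simp: std_normal_exp_moment)
  also have "\<dots> = exp (l\<^sup>2 * (\<Sum>k\<in>K. (c k)\<^sup>2) / 2)"
    by (simp add: exp_sum[OF fin, symmetric] sum_distrib_left sum_divide_distrib power_mult_distrib)
  finally show "(\<integral>x. exp (l * (\<Sum>k\<in>K. c k * x k)) \<partial>std_gaussian K) = exp (l\<^sup>2 * (\<Sum>k\<in>K. (c k)\<^sup>2) / 2)" .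
qed

lemma sets_std_gaussian_linear_ge:
  assumes "finite K"
  shows "{x\<in>space (std_gaussian K). s \<le> (\<Sum>k\<in>K. c k * x k)} \<in> sets (std_gaussian K)"
proof -
  have "(\<lambda>x. \<Sum>k\<in>K. c k * x k) \<in> borel_measurable (std_gaussian K)"
    by (intro borel_measurable_sum borel_measurable_times measurable_component_singleton) auto
  then show ?thesis by measurable
qed

text \<open>Chernoff bound, with the exponential moment optimised at \<open>l = s / S\<close>.\<close>
lemma std_gaussian_linear_tail:
  assumes fin: "finite K" and S: "S > 0" "(\<Sum>k\<in>K. (c k)\<^sup>2) \<le> S" and s: "s \<ge> 0"
  shows "measure (std_gaussian K) {x\<in>space (std_gaussian K). s \<le> (\<Sum>k\<in>K. c k * x k)}
           \<le> exp (- s\<^sup>2 / (2 * S))"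
proof -
  let ?M = "std_gaussian K"
  interpret prob_space ?M by (rule prob_space_std_gaussian)
  define l where "l = s / S"
  have l: "l \<ge> 0" using S s by (simp add: l_def)
  let ?Y = "\<lambda>x. exp (l * (\<Sum>k\<in>K. c k * x k))"
  have "measure ?M {x\<in>space ?M. s \<le> (\<Sum>k\<in>K. c k * x k)} \<le> measure ?M {x\<in>space ?M. exp (l * s) \<le> ?Y x}"
    by (rule finite_measure_mono) (auto intro: mult_left_mono l)
  also have "\<dots> \<le> (\<integral>x. ?Y x \<partial>?M) / exp (l * s)"
    by (rule integral_Markov_inequality_measure[where A="{}"])
      (auto intro: std_gaussian_exp_linear_moment(1)[OF fin])
  also have "\<dots> = exp (l\<^sup>2 * (\<Sum>k\<in>K. (c k)\<^sup>2) / 2 - l * s)"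
    by (simp add: std_gaussian_exp_linear_moment(2)[OF fin] exp_diff)
  also have "\<dots> \<le> exp (l\<^sup>2 * S / 2 - l * s)"
    using S l by (auto intro: mult_left_mono divide_right_mono)
  also have "l\<^sup>2 * S / 2 - l * s = - s\<^sup>2 / (2 * S)"
    using S by (simp add: l_def power2_eq_square field_simps)
  finally show ?thesis .
qed

lemma indep_vars_std_gaussian_coordinates:
  assumes ne: "K \<noteq> {}"
  shows "prob_space.indep_vars (std_gaussian K) (\<lambda>_. std_normal_distribution) (\<lambda>k x. x k) K"
proof -
  let ?M = "std_gaussian K"
  interpret product_prob_space "\<lambda>_. std_normal_distribution" K
    by (rule product_prob_space_std_normal)
  show ?thesis
  proof (subst P.indep_vars_iff_distr_eq_PiM[OF ne])
    show "random_variable std_normal_distribution (\<lambda>x. x i)" for i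
    proof (cases "i \<in> K")
      case True then show ?thesis by measurable
    next
      case False
      have "(\<lambda>x. undefined) \<in> measurable ?M std_normal_distribution" by simp
      then show ?thesis
        by (rule measurable_cong[THEN iffD1, rotated])
          (use False in \<open>auto simp: space_PiM PiE_def extensional_def\<close>)
    qed
    have "distr ?M ?M (\<lambda>x. \<lambda>i\<in>K. x i) = distr ?M ?M (\<lambda>x. x)"
      by (rule distr_cong) (auto simp: space_PiM PiE_def extensional_def fun_eq_iff restrict_def)
    also have "\<dots> = PiM K (\<lambda>i. distr ?M std_normal_distribution (\<lambda>x. x i))"
      by (simp, rule PiM_cong)
        (auto simp: distr_PiM_component[of K "\<lambda>_. std_normal_distribution", OF prob_space_std_normal_distribution])
    finally show "distr ?M ?M (\<lambda>x. \<lambda>i\<in>K. x i) = PiM K (\<lambda>i. distr ?M std_normal_distribution (\<lambda>x. x i))" .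
  qed
qed

lemma integral_prod_rows_std_gaussian:
  fixes h :: "nat \<Rightarrow> real \<Rightarrow> real"
  assumes finI: "finite I" and finJ: "finite J" and ne: "I \<times> J \<noteq> {}" and G: "G \<subseteq> I"
    and h_meas: "\<And>i. h i \<in> borel_measurable borel" and h_bdd: "\<And>i z. \<bar>h i z\<bar> \<le> B"
  shows "(\<integral>x. (\<Prod>i\<in>G. h i (matvec J x v i)) \<partial>std_gaussian (I \<times> J))
       = (\<Prod>i\<in>G. \<integral>x. h i (matvec J x v i) \<partial>std_gaussian (I \<times> J))"
proof -
  let ?M = "std_gaussian (I \<times> J)"
  interpret prob_space ?M by (rule prob_space_std_gaussian)
  have finG: "finite G" using G finI finite_subset by blast
  have rows: "indep_vars (\<lambda>i. std_gaussian ({i} \<times> J)) (\<lambda>i x. restrict x ({i} \<times> J)) G"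
    by (rule indep_vars_restrict[OF indep_vars_std_gaussian_coordinates[OF ne]])
      (use finI finJ G in \<open>auto simp: disjoint_family_on_def\<close>)
  have "(\<lambda>r. h i (matvec J r v i)) \<in> borel_measurable (std_gaussian ({i} \<times> J))" for i
  proof -
    have "(\<lambda>r. matvec J r v i) \<in> borel_measurable (std_gaussian ({i} \<times> J))"
      by (intro borel_measurable_sum borel_measurable_times measurable_component_singleton) auto
    then show ?thesis using h_meas[of i] by measurable
  qed
  then have "indep_vars (\<lambda>_. borel) (\<lambda>i x. h i (matvec J (restrict x ({i} \<times> J)) v i)) G"
    by (rule indep_vars_compose2[OF rows])
  moreover have "(\<lambda>x. h i (matvec J (restrict x ({i} \<times> J)) v i)) = (\<lambda>x. h i (matvec J x v i))" for i
    by (auto intro!: ext arg_cong[where f="h i"] sum.cong)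
  ultimately have indep: "indep_vars (\<lambda>_. borel) (\<lambda>i x. h i (matvec J x v i)) G"
    by simp
  have "integrable ?M (\<lambda>x. h i (matvec J x v i))" if "i \<in> G" for i
    using indep that h_bdd unfolding indep_vars_def by (intro integrable_const_bound[where B=B]) auto
  then show ?thesis
    by (rule indep_vars_lebesgue_integral[OF finG indep])
qed

lemma std_gaussian_exp_row_moment:
  assumes "i \<in> I" "finite I" "finite J"
  shows "integrable (std_gaussian (I \<times> J)) (\<lambda>x. exp (l * matvec J x v i))"
    and "(\<integral>x. exp (l * matvec J x v i) \<partial>std_gaussian (I \<times> J)) = exp (l\<^sup>2 * (\<Sum>j\<in>J. (v j)\<^sup>2) / 2)"
proof -
  have row_sum: "(\<Sum>k\<in>I \<times> J. if fst k = i then g k else 0) = (\<Sum>j\<in>J. g (i, j))" for g :: "nat \<times> nat \<Rightarrow> real"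
  proof -
    have "(\<Sum>k\<in>I \<times> J. if fst k = i then g k else 0) = (\<Sum>a\<in>I. \<Sum>b\<in>J. if a = i then g (a, b) else 0)"
      by (subst sum.cartesian_product) (auto intro!: sum.cong)
    also have "\<dots> = (\<Sum>a\<in>I. if a = i then (\<Sum>b\<in>J. g (a, b)) else 0)"
      by (auto intro!: sum.cong)
    finally show ?thesis using assms by simp
  qed
  define c where "c k = (if fst k = i then v (snd k) else 0)" for k :: "nat \<times> nat"
  have "(\<Sum>k\<in>I \<times> J. c k * x k) = matvec J x v i" for x :: "nat \<times> nat \<Rightarrow> real"
  proof -
    have "(\<Sum>k\<in>I \<times> J. c k * x k) = (\<Sum>k\<in>I \<times> J. if fst k = i then x k * v (snd k) else 0)"
      by (auto intro!: sum.cong simp: c_def)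
    then show ?thesis using row_sum[of "\<lambda>k. x k * v (snd k)"] by simp
  qed
  moreover have "(\<Sum>k\<in>I \<times> J. (c k)\<^sup>2) = (\<Sum>j\<in>J. (v j)\<^sup>2)"
  proof -
    have "(\<Sum>k\<in>I \<times> J. (c k)\<^sup>2) = (\<Sum>k\<in>I \<times> J. if fst k = i then (v (snd k))\<^sup>2 else 0)"
      by (auto intro!: sum.cong simp: c_def)
    then show ?thesis using row_sum[of "\<lambda>k. (v (snd k))\<^sup>2"] by simp
  qed
  moreover have "finite (I \<times> J)" using assms by simp
  ultimately show "integrable (std_gaussian (I \<times> J)) (\<lambda>x. exp (l * matvec J x v i))"
    and "(\<integral>x. exp (l * matvec J x v i) \<partial>std_gaussian (I \<times> J)) = exp (l\<^sup>2 * (\<Sum>j\<in>J. (v j)\<^sup>2) / 2)"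
    using std_gaussian_exp_linear_moment[of "I \<times> J" l c] by simp_all
qed

lemma exp_numeric_bounds:
  "25/16 \<le> exp (1/2::real)" "exp (1/10::real) \<le> 111/100" "exp (2::real) \<le> 74/10"
proof -
  have "5/4 \<le> exp (1/4::real)" using exp_ge_add_one_self[of "1/4::real"] by simp
  then have "5/4 * (5/4) \<le> exp (1/4::real) * exp (1/4)" by (intro mult_mono) auto
  then show "25/16 \<le> exp (1/2::real)" by (simp add: exp_add[symmetric])
  show "exp (1/10::real) \<le> 111/100" using exp_bound[of "1/10::real"] by (simp add: power2_eq_square)
  have "exp (1::real) * exp 1 \<le> 272/100 * (272/100)" using e_less_272 by (intro mult_mono) auto
  then show "exp (2::real) \<le> 74/10" by (simp add: exp_add[symmetric])
qed

lemma exp_mult_split_bound: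
  fixes t z :: real
  assumes t: "0 < t" "t \<le> 2"
  shows "exp (t * z) \<le> exp (1/10) + exp ((2 * t) * z) / 40 + 10 * (if 1/20 \<le> \<bar>z\<bar> then 1 else 0)"
proof (cases "1/20 \<le> \<bar>z\<bar>")
  case True
  have "exp (t * z) \<le> (exp (t * z))\<^sup>2 / 40 + 10"
    using sum_squares_ge_zero[of "exp (t * z) - 20" 0] by (simp add: power2_eq_square field_simps)
  also have "(exp (t * z))\<^sup>2 = exp ((2 * t) * z)" by (simp add: power2_eq_square exp_add[symmetric])
  finally show ?thesis unfolding if_P[OF True] using exp_ge_zero[of "1/10::real"] by linarith
next
  case False
  have "t * z \<le> t * \<bar>z\<bar>" using t by (intro mult_left_mono) auto
  also have "\<dots> \<le> 2 * (1/20)" using False t by (intro mult_mono) auto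
  finally have "exp (t * z) \<le> exp (1/10)" by simp
  then show ?thesis using False by (simp add: add_increasing2)
qed

text \<open>With \<open>Z = \<langle>x\<^sub>i, v\<rangle>\<close> and \<open>t = 1/\<parallel>v\<parallel>\<close> we have \<open>E exp(tZ) = e\<^sup>1\<^sup>/\<^sup>2\<close> but \<open>E exp(2tZ) = e\<^sup>2\<close>;
  by \<open>exp_mult_split_bound\<close> this is impossible unless \<open>|Z| \<ge> 1/20\<close> with some probability.\<close>
lemma row_anticoncentration:
  assumes i: "i \<in> I" and fin: "finite I" "finite J"
    and v: "1/4 \<le> (\<Sum>j\<in>J. (v j)\<^sup>2)" "(\<Sum>j\<in>J. (v j)\<^sup>2) \<le> 4"
  shows "1/40 \<le> (\<integral>x. (if 1/20 \<le> \<bar>matvec J x v i\<bar> then 1 else (0::real)) \<partial>std_gaussian (I \<times> J))"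
proof -
  let ?M = "std_gaussian (I \<times> J)"
  interpret prob_space ?M by (rule prob_space_std_gaussian)
  define S where "S = (\<Sum>j\<in>J. (v j)\<^sup>2)"
  define t where "t = 1 / sqrt S"
  define ind where "ind x = (if 1/20 \<le> \<bar>matvec J x v i\<bar> then 1 else (0::real))" for x
  have S: "S > 0" using v by (simp add: S_def)
  have t2S: "t\<^sup>2 * S = 1" using S by (simp add: t_def power_divide)
  have "1/2 \<le> sqrt S"
    using real_sqrt_le_mono[of "1/4" S] v by (simp add: S_def real_sqrt_divide)
  then have t: "0 < t" "t \<le> 2" using S by (auto simp: t_def field_simps)
  have "(\<lambda>x. matvec J x v i) \<in> borel_measurable ?M"
    using i by (intro borel_measurable_sum borel_measurable_times measurable_component_singleton) auto
  then have "ind \<in> borel_measurable ?M" unfolding ind_def by measurable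
  then have ind_int: "integrable ?M ind"
    by (intro integrable_const_bound[where B=1]) (auto simp: ind_def)
  note moments = std_gaussian_exp_row_moment[OF i fin, of _ v]
  have split: "exp (t * matvec J x v i) \<le> exp (1/10) + exp ((2 * t) * matvec J x v i) / 40 + 10 * ind x" for x
    unfolding ind_def by (rule exp_mult_split_bound[OF t])
  have "exp (1/2) = (\<integral>x. exp (t * matvec J x v i) \<partial>?M)"
    using t2S by (simp add: moments(2) S_def)
  also have "\<dots> \<le> (\<integral>x. exp (1/10) + exp ((2 * t) * matvec J x v i) / 40 + 10 * ind x \<partial>?M)"
    by (rule integral_mono)
      (auto intro!: moments(1) ind_int Bochner_Integration.integrable_add integrable_divide
        integrable_mult_right split)
  also have "\<dots> = exp (1/10) + exp 2 / 40 + 10 * (\<integral>x. ind x \<partial>?M)"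
    using moments(1)[of "2 * t"] ind_int t2S
    by (simp add: moments(2) prob_space power_mult_distrib S_def)
  finally show ?thesis using exp_numeric_bounds unfolding ind_def by linarith
qed

lemma (in prob_space) integral_exp_neg_indicator_le:
  fixes p :: real
  assumes P: "Measurable.pred M P" and p: "p \<le> (\<integral>x. (if P x then 1 else 0) \<partial>M)"
  shows "(\<integral>x. exp (- (if P x then 1 else (0::real))) \<partial>M) \<le> exp (- (p / 2))"
proof -
  define E where "E = (\<integral>x. (if P x then 1 else (0::real)) \<partial>M)"
  have exp_ind: "exp (- (if P x then 1 else 0)) = 1 - (1 - exp (-1)) * (if P x then 1 else (0::real))" for x
    by simp
  have "integrable M (\<lambda>x. if P x then 1 else (0::real))"
    using P by (intro integrable_const_bound[where B=1]) auto
  then have "(\<integral>x. exp (- (if P x then 1 else 0)) \<partial>M) = 1 - (1 - exp (-1)) * E"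
    unfolding exp_ind E_def by (simp add: prob_space)
  moreover have "(1/2) * p \<le> (1 - exp (-1)) * E"
  proof -
    have "exp (-1::real) \<le> 1/2"
      using exp_ge_add_one_self[of "1::real"] by (simp add: exp_minus field_simps)
    moreover have "0 \<le> E" unfolding E_def by (rule integral_nonneg_AE) auto
    ultimately have "(1/2) * E \<le> (1 - exp (-1)) * E" by (intro mult_right_mono) auto
    then show ?thesis using p by (simp add: E_def)
  qed
  ultimately have "(\<integral>x. exp (- (if P x then 1 else 0)) \<partial>M) \<le> 1 - (1/2) * p" by simp
  also have "\<dots> \<le> exp (- (p / 2))" using exp_ge_add_one_self[of "- (p / 2)"] by simp
  finally show ?thesis .
qed

text \<open>Chernoff: as the rows are independent, the count \<open>N\<close> has \<open>E exp(-N) \<le> exp(-p|G|/2)\<close>.\<close>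
lemma std_gaussian_few_rows_tail:
  assumes finI: "finite I" and finJ: "finite J" and ne: "I \<times> J \<noteq> {}" and G: "G \<subseteq> I"
    and p: "\<And>i. i \<in> G \<Longrightarrow> p \<le> (\<integral>x. (if c \<le> \<bar>matvec J x v i\<bar> then 1 else 0) \<partial>std_gaussian (I \<times> J))"
  shows "measure (std_gaussian (I \<times> J)) {x\<in>space (std_gaussian (I \<times> J)).
           (\<Sum>i\<in>G. if c \<le> \<bar>matvec J x v i\<bar> then 1 else 0) \<le> p * real (card G) / 4}
         \<le> exp (- (p * card G / 4))"
proof -
  let ?M = "std_gaussian (I \<times> J)"
  interpret prob_space ?M by (rule prob_space_std_gaussian)
  define N where "N x = (\<Sum>i\<in>G. if c \<le> \<bar>matvec J x v i\<bar> then 1 else (0::real))" for x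
  define m where "m = real (card G)"
  have finG: "finite G" using G finI finite_subset by blast
  have [measurable]: "(\<lambda>x. matvec J x v i) \<in> borel_measurable ?M" if "i \<in> G" for i
    using that G by (intro borel_measurable_sum borel_measurable_times measurable_component_singleton) auto
  have N_meas[measurable]: "N \<in> borel_measurable ?M"
    unfolding N_def by (rule borel_measurable_sum) measurable
  have exp_N: "exp (- N x) = (\<Prod>i\<in>G. exp (- (if c \<le> \<bar>matvec J x v i\<bar> then 1 else 0)))" for x
    by (simp add: N_def exp_sum[OF finG, symmetric] sum_negf[symmetric])
  have "(\<integral>x. exp (- N x) \<partial>?M) = (\<Prod>i\<in>G. \<integral>x. exp (- (if c \<le> \<bar>matvec J x v i\<bar> then 1 else 0)) \<partial>?M)"
    unfolding exp_N by (rule integral_prod_rows_std_gaussian[OF finI finJ ne G, where B=1]) auto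
  also have "\<dots> \<le> (\<Prod>i\<in>G. exp (- (p / 2)))"
    using p by (intro prod_mono conjI integral_nonneg_AE integral_exp_neg_indicator_le) auto
  also have "\<dots> = exp (- (p * m / 2))"
    by (simp add: m_def exp_of_nat_mult[symmetric] algebra_simps)
  finally have E: "(\<integral>x. exp (- N x) \<partial>?M) \<le> exp (- (p * m / 2))" .
  have "measure ?M {x\<in>space ?M. N x \<le> p * m / 4} \<le> measure ?M {x\<in>space ?M. exp (- (p * m / 4)) \<le> exp (- N x)}"
    by (rule finite_measure_mono) auto
  also have "\<dots> \<le> (\<integral>x. exp (- N x) \<partial>?M) / exp (- (p * m / 4))"
    by (rule integral_Markov_inequality_measure[where A="{}"])
      (auto intro!: integrable_const_bound[where B=1] simp: N_def sum_nonneg)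
  also have "\<dots> \<le> exp (- (p * m / 2)) / exp (- (p * m / 4))"
    by (rule divide_right_mono[OF E]) simp
  also have "\<dots> = exp (- (p * m / 4))"
    by (simp add: exp_diff[symmetric])
  finally show ?thesis by (simp add: N_def m_def)
qed

section \<open>Grid nets\<close>

lemma sum_exp_neg_abs_int_le:
  fixes t :: real
  assumes t: "t > 0"
  shows "(\<Sum>a\<in>{-B..B::int}. exp (- t * \<bar>a\<bar>)) \<le> 2 / (1 - exp (- t))"
proof -
  have half: "(\<Sum>a\<in>{0..B}. exp (- t * \<bar>a\<bar>)) \<le> 1 / (1 - exp (- t))"
  proof (cases "B < 0")
    case False
    have x: "exp (- t) < 1" using t by simp
    have "{0..B} = int ` {..<Suc (nat B)}"
      using False by (auto simp: image_iff intro!: bexI[of _ "nat _"])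
    then have "(\<Sum>a\<in>{0..B}. exp (- t * \<bar>a\<bar>)) = (\<Sum>n<Suc (nat B). exp (- t) ^ n)"
      by (simp add: sum.reindex exp_of_nat_mult[symmetric] mult.commute)
    also have "\<dots> = (1 - exp (- t) ^ Suc (nat B)) / (1 - exp (- t))"
      using x sum_gp_strict[of "exp (- t)" "Suc (nat B)"] by (simp only: if_False) simp
    also have "\<dots> \<le> 1 / (1 - exp (- t))" using x by (intro divide_right_mono) auto
    finally show ?thesis .
  qed (use t in simp)
  have U: "{-B..B} = {-B..<0} \<union> {0..B}" by auto
  have "(\<Sum>a\<in>{-B..B}. exp (- t * \<bar>a\<bar>)) = (\<Sum>a\<in>{-B..<0}. exp (- t * \<bar>a\<bar>)) + (\<Sum>a\<in>{0..B}. exp (- t * \<bar>a\<bar>))"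
    unfolding U by (rule sum.union_disjoint) auto
  also have "(\<Sum>a\<in>{-B..<0}. exp (- t * \<bar>a\<bar>)) \<le> (\<Sum>a\<in>uminus ` {0..B}. exp (- t * \<bar>a\<bar>))"
    by (rule sum_mono2) (auto simp: image_iff intro!: bexI[of _ "- _"])
  also have "\<dots> = (\<Sum>a\<in>{0..B}. exp (- t * \<bar>a\<bar>))"
    by (subst sum.reindex) auto
  finally show ?thesis using half by simp
qed

lemma abs_le_square_of_int: "\<bar>real_of_int z\<bar> \<le> (real_of_int z)\<^sup>2"
proof (cases "z = 0")
  case False
  then have "1 \<le> \<bar>real_of_int z\<bar>" by linarith
  then have "\<bar>real_of_int z\<bar> * 1 \<le> \<bar>real_of_int z\<bar> * \<bar>real_of_int z\<bar>" by (intro mult_left_mono) auto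
  then show ?thesis by (simp add: power2_eq_square)
qed simp

text \<open>Counting lattice points in a ball by Rankin's trick: each point weighs at least
  \<open>exp (t (R - |z|\<^sup>2))\<close>, and the weights over a box factor into one-dimensional sums.\<close>
lemma card_int_ball_le:
  fixes S :: "'a set"
  assumes fin: "finite S" and t: "t > 0"
  shows "real (card {z\<in>PiE S (\<lambda>_. {-B..B}). (\<Sum>j\<in>S. (real_of_int (z j))\<^sup>2) \<le> R})
           \<le> exp (t * R) * (2 / (1 - exp (- t))) ^ card S"
proof -
  define Box where "Box = PiE S (\<lambda>_. {-B..B})"
  define Z where "Z = {z\<in>Box. (\<Sum>j\<in>S. (real_of_int (z j))\<^sup>2) \<le> R}"
  define f where "f z = exp (t * (R - (\<Sum>j\<in>S. (real_of_int (z j))\<^sup>2)))" for z :: "'a \<Rightarrow> int"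
  have finBox: "finite Box" using fin by (simp add: Box_def finite_PiE)
  have "real (card Z) = (\<Sum>z\<in>Z. 1)" by simp
  also have "\<dots> \<le> (\<Sum>z\<in>Z. f z)"
    by (rule sum_mono) (use t in \<open>auto simp: Z_def f_def\<close>)
  also have "\<dots> \<le> (\<Sum>z\<in>Box. f z)"
    by (rule sum_mono2[OF finBox]) (auto simp: Z_def f_def)
  also have "\<dots> = (\<Sum>z\<in>Box. exp (t * R) * (\<Prod>j\<in>S. exp (- t * (real_of_int (z j))\<^sup>2)))"
    by (auto intro!: sum.cong simp: f_def exp_sum[OF fin, symmetric] exp_add[symmetric]
        sum_distrib_left sum_negf right_diff_distrib)
  also have "\<dots> \<le> (\<Sum>z\<in>Box. exp (t * R) * (\<Prod>j\<in>S. exp (- t * \<bar>real_of_int (z j)\<bar>)))"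
    using t by (intro sum_mono mult_left_mono prod_mono) (auto intro: mult_left_mono abs_le_square_of_int)
  also have "\<dots> = exp (t * R) * (\<Prod>j\<in>S. \<Sum>a\<in>{-B..B}. exp (- t * \<bar>real_of_int a\<bar>))"
    unfolding Box_def sum_distrib_left[symmetric]
    using prod_sum_PiE[OF fin, of "\<lambda>_. {-B..B}" "\<lambda>j a. exp (- t * \<bar>real_of_int a\<bar>)"] by simp
  also have "\<dots> \<le> exp (t * R) * (\<Prod>j\<in>S. 2 / (1 - exp (- t)))"
    using sum_exp_neg_abs_int_le[OF t, of B] by (intro mult_left_mono prod_mono) (auto intro: sum_nonneg)
  finally show ?thesis by (simp add: Z_def Box_def)
qed

text \<open>By rounding, these lattice points form an \<open>e\<close>-net of the unit ball (\<open>grid_net_approx\<close>).\<close>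
definition grid_net :: "nat set \<Rightarrow> real \<Rightarrow> (nat \<Rightarrow> real) set" where
  "grid_net S e = {v. (\<forall>j. j \<notin> S \<longrightarrow> v j = 0) \<and>
     (\<forall>j\<in>S. \<exists>z::int. v j = e / sqrt (real (card S)) * of_int z) \<and> (\<Sum>j\<in>S. (v j)\<^sup>2) \<le> 4}"

definition grid_net_base :: "real \<Rightarrow> real" where
  "grid_net_base e = 2 * exp 1 / (1 - exp (- (e\<^sup>2 / 4)))"

lemma square_diff_le: "(a - b)\<^sup>2 \<le> 2 * a\<^sup>2 + 2 * (b::real)\<^sup>2"
  using sum_squares_ge_zero[of "a + b" 0] by (simp add: power2_eq_square algebra_simps)

lemma grid_net_approx:
  assumes fin: "finite S" and e: "0 < e" "e \<le> 1" and u: "(\<Sum>j\<in>S. (u j)\<^sup>2) \<le> 1"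
  shows "\<exists>v\<in>grid_net S e. (\<Sum>j\<in>S. (u j - v j)\<^sup>2) \<le> e\<^sup>2"
proof (cases "S = {}")
  case True
  then show ?thesis by (intro bexI[of _ "\<lambda>_. 0"]) (auto simp: grid_net_def)
next
  case False
  define h where "h = e / sqrt (real (card S))"
  have "card S > 0" using False fin by (simp add: card_gt_0_iff)
  then have h: "h > 0" "h\<^sup>2 * card S = e\<^sup>2" using e by (simp_all add: h_def power_divide)
  define v where "v j = (if j \<in> S then h * of_int (round (u j / h)) else 0)" for j
  have "(u j - v j)\<^sup>2 \<le> h\<^sup>2 / 4" if "j \<in> S" for j
  proof -
    have "u j - v j = h * (u j / h - of_int (round (u j / h)))"
      using h that by (simp add: v_def right_diff_distrib)
    then have "\<bar>u j - v j\<bar> = h * \<bar>u j / h - of_int (round (u j / h))\<bar>"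
      using h by (simp add: abs_mult)
    also have "\<dots> \<le> h * (1/2)"
      using of_int_round_abs_le[of "u j / h"] h by (intro mult_left_mono) (auto simp: abs_minus_commute)
    finally have "\<bar>u j - v j\<bar>\<^sup>2 \<le> (h / 2)\<^sup>2" by (intro power_mono) auto
    then show ?thesis by (simp add: power_divide)
  qed
  then have "(\<Sum>j\<in>S. (u j - v j)\<^sup>2) \<le> (\<Sum>j\<in>S. h\<^sup>2 / 4)" by (rule sum_mono)
  also have "\<dots> = e\<^sup>2 / 4" using h by (simp add: field_simps)
  finally have close: "(\<Sum>j\<in>S. (u j - v j)\<^sup>2) \<le> e\<^sup>2 / 4" .
  have "(\<Sum>j\<in>S. (v j)\<^sup>2) \<le> (\<Sum>j\<in>S. 2 * (u j)\<^sup>2 + 2 * (u j - v j)\<^sup>2)"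
    by (rule sum_mono) (use square_diff_le[of "u j" "u j - v j" for j] in auto)
  also have "\<dots> = 2 * (\<Sum>j\<in>S. (u j)\<^sup>2) + 2 * (\<Sum>j\<in>S. (u j - v j)\<^sup>2)"
    by (simp add: sum.distrib sum_distrib_left)
  also have "\<dots> \<le> 4" using u close power_le_one[of e 2] e by linarith
  finally have "v \<in> grid_net S e" by (auto simp: grid_net_def v_def h_def)
  moreover have "(\<Sum>j\<in>S. (u j - v j)\<^sup>2) \<le> e\<^sup>2" using close zero_le_power2[of e] by linarith
  ultimately show ?thesis by blast
qed

lemma grid_net_base_ge_one: "e \<noteq> 0 \<Longrightarrow> 1 \<le> grid_net_base e"
proof -
  assume "e \<noteq> 0"
  then have "0 < 1 - exp (- (e\<^sup>2 / 4))" "1 - exp (- (e\<^sup>2 / 4)) \<le> 1" by auto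
  then have "2 * exp 1 / 1 \<le> grid_net_base e"
    unfolding grid_net_base_def by (intro divide_left_mono) auto
  moreover have "1 \<le> 2 * exp (1::real)" using exp_ge_add_one_self[of "1::real"] by simp
  ultimately show ?thesis by simp
qed

lemma grid_net_embeds_int_ball:
  assumes fin: "finite S" and h: "h = e / sqrt (real (card S))" "h > 0"
  shows "finite (grid_net S e)"
    and "card (grid_net S e) \<le> card {z\<in>PiE S (\<lambda>_. {-\<lceil>2/h\<rceil>..\<lceil>2/h\<rceil>}). (\<Sum>j\<in>S. (real_of_int (z j))\<^sup>2) \<le> 4 / h\<^sup>2}"
proof -
  define \<phi> where "\<phi> v = restrict (\<lambda>j. round (v j / h)) S" for v :: "nat \<Rightarrow> real"
  define Z where "Z = {z\<in>PiE S (\<lambda>_. {-\<lceil>2/h\<rceil>..\<lceil>2/h\<rceil>}). (\<Sum>j\<in>S. (real_of_int (z j))\<^sup>2) \<le> 4 / h\<^sup>2}"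
  have on_grid: "v j = h * of_int (round (v j / h))" if "v \<in> grid_net S e" "j \<in> S" for v j
    using that h by (auto simp: grid_net_def)
  have "inj_on \<phi> (grid_net S e)"
  proof (rule inj_onI, rule ext)
    fix v w j assume v: "v \<in> grid_net S e" and w: "w \<in> grid_net S e" and "\<phi> v = \<phi> w"
    then have "round (v j / h) = round (w j / h)" if "j \<in> S"
      using that unfolding \<phi>_def by (metis restrict_apply')
    then show "v j = w j"
      using on_grid[OF v, of j] on_grid[OF w, of j] v w by (cases "j \<in> S") (auto simp: grid_net_def)
  qed
  moreover have "\<phi> ` grid_net S e \<subseteq> Z"
  proof safe
    fix v assume v: "v \<in> grid_net S e"
    have "(\<Sum>j\<in>S. (v j)\<^sup>2) = h\<^sup>2 * (\<Sum>j\<in>S. (real_of_int (\<phi> v j))\<^sup>2)"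
      by (subst sum_distrib_left)
        (auto intro!: sum.cong simp: \<phi>_def power_mult_distrib[symmetric] on_grid[OF v, symmetric])
    then have sum_le: "(\<Sum>j\<in>S. (real_of_int (\<phi> v j))\<^sup>2) \<le> 4 / h\<^sup>2"
      using v h(2) by (simp add: grid_net_def field_simps)
    have "\<phi> v j \<in> {-\<lceil>2/h\<rceil>..\<lceil>2/h\<rceil>}" if "j \<in> S" for j
    proof -
      have "(real_of_int (\<phi> v j))\<^sup>2 \<le> 4 / h\<^sup>2"
        using sum_le member_le_sum[of j S "\<lambda>j. (real_of_int (\<phi> v j))\<^sup>2", OF that _ fin] by auto
      then have "\<bar>real_of_int (\<phi> v j)\<bar> \<le> sqrt (4 / h\<^sup>2)" by (simp add: real_le_rsqrt)
      also have "sqrt (4 / h\<^sup>2) = 2 / h" using h(2) by (simp add: real_sqrt_divide)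
      also have "\<dots> \<le> of_int \<lceil>2/h\<rceil>" by simp
      finally have "\<bar>\<phi> v j\<bar> \<le> \<lceil>2/h\<rceil>" by linarith
      then show ?thesis by auto
    qed
    then show "\<phi> v \<in> Z" using sum_le by (auto simp: Z_def \<phi>_def)
  qed
  moreover have "finite Z" using fin by (simp add: Z_def finite_PiE)
  ultimately show "finite (grid_net S e)" and "card (grid_net S e) \<le> card Z"
    by (meson finite_imageD finite_subset, meson card_inj_on_le)
qed

lemma grid_net_card:
  assumes fin: "finite S" and e: "0 < e"
  shows "finite (grid_net S e)"
    and "real (card (grid_net S e)) \<le> exp (real (card S) * ln (grid_net_base e))"
proof -
  have "finite (grid_net S e) \<and> real (card (grid_net S e)) \<le> grid_net_base e ^ card S"
  proof (cases "S = {}")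
    case True
    then have "grid_net S e = {\<lambda>_. 0}" by (auto simp: grid_net_def)
    then show ?thesis using True by simp
  next
    case False
    define h where "h = e / sqrt (real (card S))"
    have "card S > 0" using False fin by (simp add: card_gt_0_iff)
    then have h: "h > 0" and "e\<^sup>2 / 4 * (4 / h\<^sup>2) = card S" using e by (simp_all add: h_def power_divide)
    then have "exp (e\<^sup>2 / 4 * (4 / h\<^sup>2)) = exp 1 ^ card S" by (simp add: exp_of_nat_mult[symmetric])
    moreover have "grid_net_base e = exp 1 * (2 / (1 - exp (- (e\<^sup>2 / 4))))"
      by (simp add: grid_net_base_def)
    ultimately show ?thesis
      using grid_net_embeds_int_ball[OF fin h_def h] card_int_ball_le[OF fin, of "e\<^sup>2 / 4" "\<lceil>2/h\<rceil>" "4 / h\<^sup>2"] e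
      by (simp only: power_mult_distrib) simp
  qed
  moreover have "grid_net_base e ^ card S = exp (real (card S) * ln (grid_net_base e))"
    using grid_net_base_ge_one[of e] e by (simp add: exp_of_nat_mult)
  ultimately show "finite (grid_net S e)"
    and "real (card (grid_net S e)) \<le> exp (real (card S) * ln (grid_net_base e))" by simp_all
qed

section \<open>The Huber penalty\<close>

definition huber_deriv :: "real \<Rightarrow> real" where
  "huber_deriv t = max (-2) (min 2 t)"

lemma abs_huber_deriv_le: "\<bar>huber_deriv t\<bar> \<le> 2"
  by (simp add: huber_deriv_def)

lemma huber_ge_linear: "2 * b - 2 \<le> huber b" "- 2 * b - 2 \<le> huber b"
  unfolding huber_def using sum_squares_ge_zero[of "b - 2" 0] sum_squares_ge_zero[of "b + 2" 0]
  by (auto simp: power2_eq_square algebra_simps)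

lemma huber_subgradient: "huber a + huber_deriv a * (b - a) \<le> huber b"
proof (cases "\<bar>a\<bar> \<le> 2")
  case a: True
  then have da: "huber_deriv a = a" "huber a = a\<^sup>2 / 2" by (auto simp: huber_deriv_def huber_def)
  consider "\<bar>b\<bar> \<le> 2" | "b > 2" | "b < -2" by linarith
  then show ?thesis
  proof cases
    case 1
    then show ?thesis using da sum_squares_ge_zero[of "b - a" 0]
      by (simp add: huber_def power2_eq_square algebra_simps)
  next
    case 2
    have "(b - 2)\<^sup>2 \<le> (b - a)\<^sup>2" using a 2 by (intro power_mono) auto
    then show ?thesis using da 2 by (simp add: huber_def power2_eq_square algebra_simps)
  next
    case 3
    have "(-2 - b)\<^sup>2 \<le> (a - b)\<^sup>2" using a 3 by (intro power_mono) auto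
    then show ?thesis using da 3 by (simp add: huber_def power2_eq_square algebra_simps)
  qed
next
  case False
  then consider "a > 2" | "a < -2" by linarith
  then show ?thesis
  proof cases
    case 1
    then have "huber_deriv a = 2" "huber a = 2 * a - 2" by (auto simp: huber_deriv_def huber_def)
    then show ?thesis using huber_ge_linear(1)[of b] by (simp add: algebra_simps)
  next
    case 2
    then have "huber_deriv a = -2" "huber a = - 2 * a - 2" by (auto simp: huber_deriv_def huber_def)
    then show ?thesis using huber_ge_linear(2)[of b] by (simp add: algebra_simps)
  qed
qed

lemma huber_taylor_near_zero:
  assumes "\<bar>a\<bar> \<le> 1" "\<bar>b - a\<bar> \<le> 1"
  shows "huber b = huber a + huber_deriv a * (b - a) + (b - a)\<^sup>2 / 2"
proof -
  have "huber b = b\<^sup>2 / 2" "huber a = a\<^sup>2 / 2" "huber_deriv a = a"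
    using assms by (auto simp: huber_def huber_deriv_def)
  then show ?thesis by (simp add: power2_eq_square field_simps)
qed

lemma huber_convex:
  assumes "0 \<le> s" "s \<le> 1"
  shows "huber ((1 - s) * a + s * b) \<le> (1 - s) * huber a + s * huber b"
proof -
  define x where "x = (1 - s) * a + s * b"
  have "(1 - s) * (huber x + huber_deriv x * (a - x)) + s * (huber x + huber_deriv x * (b - x))
      \<le> (1 - s) * huber a + s * huber b"
    using assms huber_subgradient[of x a] huber_subgradient[of x b]
    by (intro add_mono mult_left_mono) auto
  moreover have "(1 - s) * (huber x + huber_deriv x * (a - x)) + s * (huber x + huber_deriv x * (b - x)) = huber x"
    by (simp add: x_def algebra_simps)
  ultimately show ?thesis by (simp add: x_def)
qed

section \<open>Consequences of the net bounds\<close>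

lemma abs_sum_mult_le_sqrt:
  fixes a b :: "'a \<Rightarrow> real"
  shows "\<bar>\<Sum>i\<in>A. a i * b i\<bar> \<le> sqrt (\<Sum>i\<in>A. (a i)\<^sup>2) * sqrt (\<Sum>i\<in>A. (b i)\<^sup>2)"
proof -
  have "\<bar>\<Sum>i\<in>A. a i * b i\<bar> = sqrt ((\<Sum>i\<in>A. a i * b i)\<^sup>2)" by simp
  also have "\<dots> \<le> sqrt ((\<Sum>i\<in>A. (a i)\<^sup>2) * (\<Sum>i\<in>A. (b i)\<^sup>2))"
    by (rule real_sqrt_le_mono) (rule Cauchy_Schwarz_ineq_sum)
  finally show ?thesis by (simp add: real_sqrt_mult)
qed

lemma sum_square_normalize:
  fixes w :: "'a \<Rightarrow> real"
  assumes "0 < sqrt (\<Sum>j\<in>J. (w j)\<^sup>2)"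
  shows "(\<Sum>j\<in>J. (w j / sqrt (\<Sum>j\<in>J. (w j)\<^sup>2))\<^sup>2) = 1"
    and "(\<Sum>j\<in>J. w j * (w j / sqrt (\<Sum>j\<in>J. (w j)\<^sup>2))) = sqrt (\<Sum>j\<in>J. (w j)\<^sup>2)"
proof -
  have S: "0 < (\<Sum>j\<in>J. (w j)\<^sup>2)" using assms by simp
  show "(\<Sum>j\<in>J. (w j / sqrt (\<Sum>j\<in>J. (w j)\<^sup>2))\<^sup>2) = 1"
    using S by (simp add: power_divide sum_divide_distrib[symmetric])
  have "(\<Sum>j\<in>J. w j * (w j / sqrt (\<Sum>j\<in>J. (w j)\<^sup>2))) = (\<Sum>j\<in>J. (w j)\<^sup>2) / sqrt (\<Sum>j\<in>J. (w j)\<^sup>2)"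
    by (simp add: sum_divide_distrib[symmetric] power2_eq_square)
  also have "\<dots> = sqrt (\<Sum>j\<in>J. (w j)\<^sup>2)"
    using S by (metis real_div_sqrt less_imp_le)
  finally show "(\<Sum>j\<in>J. w j * (w j / sqrt (\<Sum>j\<in>J. (w j)\<^sup>2))) = sqrt (\<Sum>j\<in>J. (w j)\<^sup>2)" .
qed

text \<open>Testing a linear functional against a \<open>1/2\<close>-net controls its norm: the net point \<open>v\<close>
  next to \<open>w / \<parallel>w\<parallel>\<close> gives \<open>\<parallel>w\<parallel> \<le> \<langle>w, v\<rangle> + \<parallel>w\<parallel> / 2\<close>.\<close>
lemma sum_square_le_of_grid_net:
  fixes w :: "nat \<Rightarrow> real"
  assumes fin: "finite J" and s: "s \<ge> 0"
    and net: "\<And>v. v \<in> grid_net J (1/2) \<Longrightarrow> (\<Sum>j\<in>J. w j * v j) < s"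
  shows "(\<Sum>j\<in>J. (w j)\<^sup>2) \<le> (2 * s)\<^sup>2"
proof -
  define nw where "nw = sqrt (\<Sum>j\<in>J. (w j)\<^sup>2)"
  have nw0: "nw \<ge> 0" by (simp add: nw_def sum_nonneg)
  have "nw \<le> 2 * s"
  proof (cases "nw = 0")
    case False
    then have nw: "nw > 0" using nw0 by simp
    define u where "u j = w j / nw" for j
    note u = sum_square_normalize[of w J, folded nw_def, OF nw, folded u_def]
    obtain v where v: "v \<in> grid_net J (1/2)" and uv: "(\<Sum>j\<in>J. (u j - v j)\<^sup>2) \<le> (1/2)\<^sup>2"
      using grid_net_approx[OF fin, of "1/2" u] u(1) by auto
    have "nw = (\<Sum>j\<in>J. w j * v j) + (\<Sum>j\<in>J. w j * (u j - v j))"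
      using u(2) by (simp add: sum.distrib[symmetric] algebra_simps)
    also have "(\<Sum>j\<in>J. w j * (u j - v j)) \<le> nw * sqrt (\<Sum>j\<in>J. (u j - v j)\<^sup>2)"
      using abs_sum_mult_le_sqrt[of w "\<lambda>j. u j - v j" J] by (simp add: nw_def)
    also have "\<dots> \<le> nw * (1/2)"
      using real_sqrt_le_mono[OF uv] nw0 by (intro mult_left_mono) auto
    finally show ?thesis using net[OF v] by simp
  qed (use s in simp)
  then have "nw\<^sup>2 \<le> (2 * s)\<^sup>2" using nw0 by (intro power_mono) auto
  then show ?thesis by (simp add: nw_def sum_nonneg)
qed

abbreviation matvec_norm :: "nat set \<Rightarrow> nat set \<Rightarrow> (nat \<times> nat \<Rightarrow> real) \<Rightarrow> (nat \<Rightarrow> real) \<Rightarrow> real" where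
  "matvec_norm G J X u \<equiv> sqrt (\<Sum>i\<in>G. (matvec J X u i)\<^sup>2)"

lemma matvec_norm_le_of_unit_ball:
  assumes finJ: "finite J"
    and unit: "\<And>u. (\<Sum>j\<in>J. (u j)\<^sup>2) \<le> 1 \<Longrightarrow> matvec_norm G J X u \<le> M"
  shows "matvec_norm G J X w \<le> M * sqrt (\<Sum>j\<in>J. (w j)\<^sup>2)"
proof (cases "sqrt (\<Sum>j\<in>J. (w j)\<^sup>2) = 0")
  case True
  then have "\<forall>j\<in>J. w j = 0" using finJ by (simp add: sum_nonneg_eq_0_iff)
  then show ?thesis using True by simp
next
  case False
  define nw where "nw = sqrt (\<Sum>j\<in>J. (w j)\<^sup>2)"
  have "0 \<le> (\<Sum>j\<in>J. (w j)\<^sup>2)" by (simp add: sum_nonneg)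
  then have nw: "nw > 0" using False by (simp add: nw_def)
  have "matvec_norm G J X (\<lambda>j. w j / nw) = sqrt ((\<Sum>i\<in>G. (matvec J X w i)\<^sup>2) / nw\<^sup>2)"
    by (simp add: sum_divide_distrib[symmetric] power_divide)
  also have "\<dots> = matvec_norm G J X w / nw" using nw by (simp add: real_sqrt_divide)
  finally have "matvec_norm G J X w / nw \<le> M"
    using unit[of "\<lambda>j. w j / nw"] sum_square_normalize(1)[of w J] nw by (simp add: nw_def)
  then show ?thesis using nw by (simp add: nw_def pos_divide_le_eq)
qed

text \<open>If \<open>M\<close> bounds the operator norm of \<open>X\<close> on the rows \<open>G\<close>, testing against nets on both
  sides gives \<open>\<parallel>X u\<parallel> \<le> s + M/6 + 2M/6\<close> for unit vectors \<open>u\<close>.\<close>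
lemma matvec_norm_le_of_grid_net_slack:
  assumes finG: "finite G" and finJ: "finite J" and s: "s \<ge> 0" and M: "M \<ge> 0"
    and scale: "\<And>w. matvec_norm G J X w \<le> M * sqrt (\<Sum>j\<in>J. (w j)\<^sup>2)"
    and net: "\<And>z v. z \<in> grid_net G (1/6) \<Longrightarrow> v \<in> grid_net J (1/6) \<Longrightarrow> (\<Sum>i\<in>G. z i * matvec J X v i) < s"
    and u: "(\<Sum>j\<in>J. (u j)\<^sup>2) \<le> 1"
  shows "matvec_norm G J X u \<le> s + M / 2"
proof (cases "matvec_norm G J X u = 0")
  case False
  define q where "q = matvec_norm G J X u"
  have "0 \<le> (\<Sum>i\<in>G. (matvec J X u i)\<^sup>2)" by (simp add: sum_nonneg)
  then have q: "q > 0" using False by (simp add: q_def)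
  have "sqrt (\<Sum>j\<in>J. (u j)\<^sup>2) \<le> 1" using u by simp
  then have "q \<le> M * 1" unfolding q_def using scale[of u] mult_left_mono[OF _ M] by (meson order.trans)
  define z0 where "z0 i = matvec J X u i / q" for i
  note z0 = sum_square_normalize[of "matvec J X u" G, folded q_def, OF q, folded z0_def]
  obtain z where z: "z \<in> grid_net G (1/6)" and zz: "(\<Sum>i\<in>G. (z0 i - z i)\<^sup>2) \<le> (1/6)\<^sup>2"
    using grid_net_approx[OF finG, of "1/6" z0] z0(1) by auto
  obtain v where v: "v \<in> grid_net J (1/6)" and uv: "(\<Sum>j\<in>J. (u j - v j)\<^sup>2) \<le> (1/6)\<^sup>2"
    using grid_net_approx[OF finJ, of "1/6" u] u by auto
  have diff: "matvec J X (\<lambda>j. u j - v j) i = matvec J X u i - matvec J X v i" for i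
    by (simp add: sum_subtractf right_diff_distrib)
  have "q = (\<Sum>i\<in>G. z0 i * matvec J X u i)" using z0(2) by (simp add: mult.commute)
  also have "\<dots> = (\<Sum>i\<in>G. z i * matvec J X v i) + (\<Sum>i\<in>G. (z0 i - z i) * matvec J X u i)
            + (\<Sum>i\<in>G. z i * matvec J X (\<lambda>j. u j - v j) i)"
    by (simp only: diff sum.distrib[symmetric]) (rule sum.cong; simp add: algebra_simps)
  also have "(\<Sum>i\<in>G. (z0 i - z i) * matvec J X u i) \<le> sqrt (\<Sum>i\<in>G. (z0 i - z i)\<^sup>2) * q"
    using abs_sum_mult_le_sqrt[of "\<lambda>i. z0 i - z i" "matvec J X u" G] by (simp add: q_def)
  also have "\<dots> \<le> (1/6) * M"
    using real_sqrt_le_mono[OF zz] \<open>q \<le> M * 1\<close> q by (intro mult_mono) auto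
  also have "(\<Sum>i\<in>G. z i * matvec J X (\<lambda>j. u j - v j) i) \<le> 2 * (M * (1/6))"
  proof -
    have "sqrt (\<Sum>i\<in>G. (z i)\<^sup>2) \<le> 2"
      using z real_sqrt_le_mono[of _ 4] by (simp add: grid_net_def real_sqrt_four)
    moreover have "M * sqrt (\<Sum>j\<in>J. (u j - v j)\<^sup>2) \<le> M * (1/6)"
      using real_sqrt_le_mono[OF uv] M by (intro mult_left_mono) auto
    ultimately have "sqrt (\<Sum>i\<in>G. (z i)\<^sup>2) * matvec_norm G J X (\<lambda>j. u j - v j) \<le> 2 * (M * (1/6))"
      using scale[of "\<lambda>j. u j - v j"] by (intro mult_mono) (auto simp: sum_nonneg)
    then show ?thesis
      using abs_sum_mult_le_sqrt[of z "matvec J X (\<lambda>j. u j - v j)" G] by linarith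
  qed
  finally show ?thesis using net[OF z v] by (simp add: q_def)
qed (use s M in simp)

lemma matvec_norm_le_of_grid_net:
  assumes finG: "finite G" and finJ: "finite J" and s: "s \<ge> 0"
    and net: "\<And>z v. z \<in> grid_net G (1/6) \<Longrightarrow> v \<in> grid_net J (1/6) \<Longrightarrow> (\<Sum>i\<in>G. z i * matvec J X v i) < s"
  shows "(\<Sum>i\<in>G. (matvec J X u i)\<^sup>2) \<le> (2 * s)\<^sup>2 * (\<Sum>j\<in>J. (u j)\<^sup>2)"
proof -
  define U where "U = {u::nat\<Rightarrow>real. (\<Sum>j\<in>J. (u j)\<^sup>2) \<le> 1}"
  define M where "M = Sup (matvec_norm G J X ` U)"
  have "matvec_norm G J X u \<le> sqrt (\<Sum>i\<in>G. \<Sum>j\<in>J. (X (i, j))\<^sup>2)" if "u \<in> U" for u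
  proof (intro real_sqrt_le_mono sum_mono)
    fix i
    have "(matvec J X u i)\<^sup>2 \<le> (\<Sum>j\<in>J. (X (i, j))\<^sup>2) * (\<Sum>j\<in>J. (u j)\<^sup>2)"
      by (rule Cauchy_Schwarz_ineq_sum)
    also have "\<dots> \<le> (\<Sum>j\<in>J. (X (i, j))\<^sup>2)"
      using that by (intro mult_left_le) (auto simp: U_def sum_nonneg)
    finally show "(matvec J X u i)\<^sup>2 \<le> (\<Sum>j\<in>J. (X (i, j))\<^sup>2)" .
  qed
  then have "bdd_above (matvec_norm G J X ` U)"
    by (intro bdd_aboveI[of _ "sqrt (\<Sum>i\<in>G. \<Sum>j\<in>J. (X (i, j))\<^sup>2)"]) blast
  then have le_M: "matvec_norm G J X u \<le> M" if "u \<in> U" for u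
    unfolding M_def using that by (intro cSup_upper) auto
  have M: "M \<ge> 0" using le_M[of "\<lambda>_. 0"] by (simp add: U_def)
  have scale: "matvec_norm G J X w \<le> M * sqrt (\<Sum>j\<in>J. (w j)\<^sup>2)" for w
    by (rule matvec_norm_le_of_unit_ball[OF finJ]) (simp add: le_M U_def)
  have "M \<le> s + M / 2"
    unfolding M_def using matvec_norm_le_of_grid_net_slack[OF finG finJ s M scale net]
    by (intro cSup_least) (auto simp: U_def M_def intro: exI[of _ "\<lambda>_. 0"])
  then have "M * sqrt (\<Sum>j\<in>J. (u j)\<^sup>2) \<le> 2 * s * sqrt (\<Sum>j\<in>J. (u j)\<^sup>2)"
    by (intro mult_right_mono) (auto simp: sum_nonneg)
  then have "matvec_norm G J X u \<le> 2 * s * sqrt (\<Sum>j\<in>J. (u j)\<^sup>2)"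
    using scale[of u] by linarith
  then have "(matvec_norm G J X u)\<^sup>2 \<le> (2 * s * sqrt (\<Sum>j\<in>J. (u j)\<^sup>2))\<^sup>2"
    by (intro power_mono) (auto simp: sum_nonneg)
  then show ?thesis by (simp add: sum_nonneg power_mult_distrib)
qed

lemma sum_indicator_eq_card:
  "finite A \<Longrightarrow> (\<Sum>i\<in>A. if P i then 1 else (0::real)) = real (card {i\<in>A. P i})"
  by (simp add: sum.If_cases Collect_conj_eq Int_commute Collect_mem_eq)

lemma card_abs_ge_le_sum_squares:
  fixes f :: "'a \<Rightarrow> real"
  assumes fin: "finite A" and a: "a > 0"
  shows "real (card {i\<in>A. a \<le> \<bar>f i\<bar>}) * a\<^sup>2 \<le> (\<Sum>i\<in>A. (f i)\<^sup>2)"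
proof -
  have "real (card {i\<in>A. a \<le> \<bar>f i\<bar>}) * a\<^sup>2 = (\<Sum>i\<in>{i\<in>A. a \<le> \<bar>f i\<bar>}. a\<^sup>2)" by simp
  also have "\<dots> \<le> (\<Sum>i\<in>{i\<in>A. a \<le> \<bar>f i\<bar>}. (f i)\<^sup>2)"
  proof (rule sum_mono)
    fix i assume "i \<in> {i\<in>A. a \<le> \<bar>f i\<bar>}"
    then have "a\<^sup>2 \<le> \<bar>f i\<bar>\<^sup>2" using a by (intro power_mono) auto
    then show "a\<^sup>2 \<le> (f i)\<^sup>2" by simp
  qed
  also have "\<dots> \<le> (\<Sum>i\<in>A. (f i)\<^sup>2)" by (rule sum_mono2) (use fin in auto)
  finally show ?thesis .
qed

text \<open>A unit vector \<open>u\<close> is within \<open>e\<close> of a net point \<open>v\<close> with \<open>\<parallel>v\<parallel>\<^sup>2 \<ge> 1/4\<close>; rows where \<open>Xv\<close> is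
  large but \<open>Xu\<close> is not have large \<open>X(u - v)\<close>, and the operator norm bound \<open>K\<close> leaves few of those.\<close>
lemma many_large_rows_of_grid_net:
  assumes finG: "finite G" and finJ: "finite J" and K: "K \<ge> 0"
    and op: "\<And>w. (\<Sum>i\<in>G. (matvec J X w i)\<^sup>2) \<le> K * (\<Sum>j\<in>J. (w j)\<^sup>2)"
    and e: "0 < e" "e \<le> 1/2" and eK: "1600 * K * e\<^sup>2 \<le> real (card G) / 320"
    and net: "\<And>v. v \<in> grid_net J e \<Longrightarrow> 1/4 \<le> (\<Sum>j\<in>J. (v j)\<^sup>2) \<Longrightarrow>
        real (card G) / 160 < real (card {i\<in>G. 1/20 \<le> \<bar>matvec J X v i\<bar>})"
    and u: "(\<Sum>j\<in>J. (u j)\<^sup>2) = 1"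
  shows "real (card G) / 320 \<le> real (card {i\<in>G. 1/40 \<le> \<bar>matvec J X u i\<bar>})"
proof -
  obtain v where v: "v \<in> grid_net J e" and uv: "(\<Sum>j\<in>J. (u j - v j)\<^sup>2) \<le> e\<^sup>2"
    using grid_net_approx[OF finJ e(1), of u] e u by auto
  have "(\<Sum>j\<in>J. (u j)\<^sup>2) \<le> (\<Sum>j\<in>J. 2 * (v j)\<^sup>2 + 2 * (u j - v j)\<^sup>2)"
    by (rule sum_mono) (use square_diff_le[of "v j" "v j - u j" for j] in \<open>auto simp: power2_commute\<close>)
  then have "1 \<le> 2 * (\<Sum>j\<in>J. (v j)\<^sup>2) + 2 * (\<Sum>j\<in>J. (u j - v j)\<^sup>2)"
    using u by (simp add: sum.distrib sum_distrib_left)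
  moreover have "e\<^sup>2 \<le> (1/2)\<^sup>2" using e by (intro power_mono) auto
  ultimately have "1/4 \<le> (\<Sum>j\<in>J. (v j)\<^sup>2)"
    using uv by (simp add: power_divide)
  then have many: "real (card G) / 160 < real (card {i\<in>G. 1/20 \<le> \<bar>matvec J X v i\<bar>})"
    by (rule net[OF v])
  define far where "far = {i\<in>G. 1/40 \<le> \<bar>matvec J X (\<lambda>j. u j - v j) i\<bar>}"
  have "{i\<in>G. 1/20 \<le> \<bar>matvec J X v i\<bar>} \<subseteq> {i\<in>G. 1/40 \<le> \<bar>matvec J X u i\<bar>} \<union> far"
  proof safe
    fix i assume "i \<in> G" "1/20 \<le> \<bar>matvec J X v i\<bar>" "i \<notin> far"
    moreover have "matvec J X (\<lambda>j. u j - v j) i = matvec J X u i - matvec J X v i"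
      by (simp add: sum_subtractf right_diff_distrib)
    ultimately show "1/40 \<le> \<bar>matvec J X u i\<bar>"
      using abs_triangle_ineq4[of "matvec J X u i" "matvec J X u i - matvec J X v i"] by (auto simp: far_def)
  qed
  then have "card {i\<in>G. 1/20 \<le> \<bar>matvec J X v i\<bar>} \<le> card {i\<in>G. 1/40 \<le> \<bar>matvec J X u i\<bar>} + card far"
    using finG by (intro order.trans[OF card_mono card_Un_le]) (auto simp: far_def)
  moreover have "real (card far) * (1/40)\<^sup>2 \<le> K * e\<^sup>2"
  proof -
    have "real (card far) * (1/40)\<^sup>2 \<le> (\<Sum>i\<in>G. (matvec J X (\<lambda>j. u j - v j) i)\<^sup>2)"
      unfolding far_def by (rule card_abs_ge_le_sum_squares[OF finG]) simp
    also have "\<dots> \<le> K * (\<Sum>j\<in>J. (u j - v j)\<^sup>2)" by (rule op)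
    also have "\<dots> \<le> K * e\<^sup>2" using uv K by (rule mult_left_mono)
    finally show ?thesis .
  qed
  ultimately show ?thesis using many eK by (simp add: power_divide)
qed

lemma sum_huber_shrink_le:
  assumes le: "(\<Sum>i\<in>I. huber (a i - \<eta> i)) \<le> (\<Sum>i\<in>I. huber (- \<eta> i))" and s: "0 \<le> s" "s \<le> 1"
  shows "(\<Sum>i\<in>I. huber (s * a i - \<eta> i)) \<le> (\<Sum>i\<in>I. huber (- \<eta> i))"
proof -
  have "(\<Sum>i\<in>I. huber (s * a i - \<eta> i)) = (\<Sum>i\<in>I. huber ((1 - s) * (- \<eta> i) + s * (a i - \<eta> i)))"
    by (simp add: algebra_simps)
  also have "\<dots> \<le> (\<Sum>i\<in>I. (1 - s) * huber (- \<eta> i) + s * huber (a i - \<eta> i))"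
    by (rule sum_mono) (rule huber_convex[OF s])
  also have "\<dots> = (1 - s) * (\<Sum>i\<in>I. huber (- \<eta> i)) + s * (\<Sum>i\<in>I. huber (a i - \<eta> i))"
    by (simp add: sum.distrib sum_distrib_left)
  also have "\<dots> \<le> (\<Sum>i\<in>I. huber (- \<eta> i))"
    using le s by (simp add: algebra_simps mult_left_mono)
  finally show ?thesis .
qed

lemma sum_huber_increment_ge:
  assumes fin: "finite I" and T: "T \<subseteq> I" "\<And>i. i \<in> T \<Longrightarrow> \<bar>\<eta> i\<bar> \<le> 1 \<and> \<bar>t i\<bar> \<le> 1"
  shows "(\<Sum>i\<in>I. huber_deriv (- \<eta> i) * t i) + (\<Sum>i\<in>T. (t i)\<^sup>2 / 2)
           \<le> (\<Sum>i\<in>I. huber (t i - \<eta> i)) - (\<Sum>i\<in>I. huber (- \<eta> i))"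
proof -
  have "huber_deriv (- \<eta> i) * t i + (if i \<in> T then (t i)\<^sup>2 / 2 else 0) \<le> huber (t i - \<eta> i) - huber (- \<eta> i)"
    for i
  proof (cases "i \<in> T")
    case True
    then have "\<bar>- \<eta> i\<bar> \<le> 1" "\<bar>(t i - \<eta> i) - (- \<eta> i)\<bar> \<le> 1" using T(2) by auto
    from huber_taylor_near_zero[OF this] True show ?thesis by simp
  next
    case False
    from huber_subgradient[of "- \<eta> i" "t i - \<eta> i"] False show ?thesis by simp
  qed
  then have "(\<Sum>i\<in>I. huber_deriv (- \<eta> i) * t i + (if i \<in> T then (t i)\<^sup>2 / 2 else 0))
      \<le> (\<Sum>i\<in>I. huber (t i - \<eta> i) - huber (- \<eta> i))"
    by (rule sum_mono)
  moreover have "(\<Sum>i\<in>I. if i \<in> T then (t i)\<^sup>2 / 2 else 0) = (\<Sum>i\<in>T. (t i)\<^sup>2 / 2)"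
    using T(1) fin by (simp add: sum.If_cases Int_absorb1)
  ultimately show ?thesis by (simp add: sum.distrib sum_subtractf)
qed

text \<open>Rows on which \<open>r X u\<close> is large are few by the operator norm bound, so most of the
  rows where \<open>X u\<close> is bounded below stay in the quadratic range of the Huber penalty.\<close>
lemma card_quadratic_rows_ge:
  assumes finG: "finite G" and r: "K * r\<^sup>2 \<le> real (card G) / 640"
    and op: "(\<Sum>i\<in>G. (matvec J X u i)\<^sup>2) \<le> K * (\<Sum>j\<in>J. (u j)\<^sup>2)" and u: "(\<Sum>j\<in>J. (u j)\<^sup>2) = 1"
    and large: "real (card G) / 320 \<le> real (card {i\<in>G. 1/40 \<le> \<bar>matvec J X u i\<bar>})"
  shows "real (card G) / 640 \<le> real (card {i\<in>G. 1/40 \<le> \<bar>matvec J X u i\<bar> \<and> \<bar>r * matvec J X u i\<bar> \<le> 1})"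
proof -
  define T where "T = {i\<in>G. 1/40 \<le> \<bar>matvec J X u i\<bar> \<and> \<bar>r * matvec J X u i\<bar> \<le> 1}"
  define Bad where "Bad = {i\<in>G. 1 \<le> \<bar>r * matvec J X u i\<bar>}"
  have "real (card Bad) * 1\<^sup>2 \<le> (\<Sum>i\<in>G. (r * matvec J X u i)\<^sup>2)"
    unfolding Bad_def by (rule card_abs_ge_le_sum_squares[OF finG]) simp
  also have "\<dots> = (\<Sum>i\<in>G. r\<^sup>2 * (matvec J X u i)\<^sup>2)"
    by (simp only: power_mult_distrib)
  also have "\<dots> = r\<^sup>2 * (\<Sum>i\<in>G. (matvec J X u i)\<^sup>2)"
    by (rule sum_distrib_left[symmetric])
  also have "\<dots> \<le> r\<^sup>2 * K" using op u by (intro mult_left_mono) auto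
  finally have "real (card Bad) \<le> real (card G) / 640" using r by (simp add: mult.commute)
  moreover have "{i\<in>G. 1/40 \<le> \<bar>matvec J X u i\<bar>} \<subseteq> T \<union> Bad" by (auto simp: T_def Bad_def)
  then have "card {i\<in>G. 1/40 \<le> \<bar>matvec J X u i\<bar>} \<le> card T + card Bad"
    using finG by (intro order.trans[OF card_mono card_Un_le]) (auto simp: T_def Bad_def)
  ultimately show ?thesis using large unfolding T_def by linarith
qed

lemma sum_mult_matvec_lower_bound:
  assumes W: "W \<ge> 0" "(\<Sum>j\<in>J. (\<Sum>i\<in>I. c i * X (i, j))\<^sup>2) \<le> W\<^sup>2"
    and D: "(\<Sum>j\<in>J. (D j)\<^sup>2) \<le> r\<^sup>2" "r \<ge> 0"
  shows "- (W * r) \<le> (\<Sum>i\<in>I. c i * matvec J X D i)"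
proof -
  have "(\<Sum>i\<in>I. c i * matvec J X D i) = (\<Sum>j\<in>J. (\<Sum>i\<in>I. c i * X (i, j)) * D j)"
    by (simp add: sum_distrib_left sum_distrib_right mult_ac) (rule sum.swap)
  also have "\<bar>\<dots>\<bar> \<le> sqrt (\<Sum>j\<in>J. (\<Sum>i\<in>I. c i * X (i, j))\<^sup>2) * sqrt (\<Sum>j\<in>J. (D j)\<^sup>2)"
    by (rule abs_sum_mult_le_sqrt)
  also have "\<dots> \<le> W * r"
    using real_sqrt_le_mono[OF W(2)] real_sqrt_le_mono[OF D(1)] W(1) D(2) by (intro mult_mono) (auto simp: sum_nonneg)
  finally show ?thesis by linarith
qed

text \<open>If \<open>\<parallel>\<Delta>\<parallel> > r\<close>, shrink \<open>\<Delta>\<close> to \<open>D\<close> of norm \<open>r\<close>; by convexity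
  \<open>D\<close> still does not increase the loss, while the loss increment is at least
  \<open>-W r\<close> (gradient at the truth) plus \<open>|G| r\<^sup>2 / 2048000\<close> (quadratic rows).\<close>
lemma huber_minimizer_error_le:
  fixes X :: "nat \<times> nat \<Rightarrow> real" and \<eta> \<Delta> :: "nat \<Rightarrow> real"
  assumes finI: "finite I" and G: "G = {i\<in>I. \<bar>\<eta> i\<bar> \<le> 1}"
    and min: "(\<Sum>i\<in>I. huber (matvec J X \<Delta> i - \<eta> i)) \<le> (\<Sum>i\<in>I. huber (- \<eta> i))"
    and W: "W \<ge> 0" "(\<Sum>j\<in>J. (\<Sum>i\<in>I. huber_deriv (- \<eta> i) * X (i, j))\<^sup>2) \<le> W\<^sup>2"
    and op: "\<And>D. (\<Sum>i\<in>G. (matvec J X D i)\<^sup>2) \<le> K * (\<Sum>j\<in>J. (D j)\<^sup>2)"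
    and large: "\<And>u. (\<Sum>j\<in>J. (u j)\<^sup>2) = 1 \<Longrightarrow>
        real (card G) / 320 \<le> real (card {i\<in>G. 1/40 \<le> \<bar>matvec J X u i\<bar>})"
    and r: "r > 0" "K * r\<^sup>2 \<le> real (card G) / 640" "2048000 * W < real (card G) * r"
  shows "(\<Sum>j\<in>J. (\<Delta> j)\<^sup>2) \<le> r\<^sup>2"
proof (rule ccontr)
  define m where "m = real (card G)"
  define nd where "nd = sqrt (\<Sum>j\<in>J. (\<Delta> j)\<^sup>2)"
  assume "\<not> (\<Sum>j\<in>J. (\<Delta> j)\<^sup>2) \<le> r\<^sup>2"
  then have "r < nd" using r(1) unfolding nd_def by (metis abs_of_pos real_less_rsqrt not_le)
  then have nd: "nd > 0" using r(1) by simp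
  define u where "u j = \<Delta> j / nd" for j
  define t where "t i = r * matvec J X u i" for i
  define T where "T = {i\<in>G. 1/40 \<le> \<bar>matvec J X u i\<bar> \<and> \<bar>t i\<bar> \<le> 1}"
  have u: "(\<Sum>j\<in>J. (u j)\<^sup>2) = 1"
    using sum_square_normalize(1)[of \<Delta> J] nd by (simp add: u_def nd_def)
  have t: "t i = (r / nd) * matvec J X \<Delta> i" for i
    by (simp add: t_def u_def sum_distrib_left sum_divide_distrib algebra_simps)
  have shrunk: "(\<Sum>i\<in>I. huber (t i - \<eta> i)) \<le> (\<Sum>i\<in>I. huber (- \<eta> i))"
    unfolding t using min nd \<open>r < nd\<close> r(1) by (intro sum_huber_shrink_le) auto
  have "T \<subseteq> I" and "\<And>i. i \<in> T \<Longrightarrow> \<bar>\<eta> i\<bar> \<le> 1 \<and> \<bar>t i\<bar> \<le> 1"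
    by (auto simp: T_def G)
  note increment = sum_huber_increment_ge[OF finI this(1), of \<eta> t, OF this(2)]
  have "t i = matvec J X (\<lambda>j. r * u j) i" for i
    by (simp add: t_def sum_distrib_left mult_ac)
  moreover have "(\<Sum>j\<in>J. (r * u j)\<^sup>2) \<le> r\<^sup>2"
    using u by (simp add: power_mult_distrib sum_distrib_left[symmetric])
  ultimately have linear: "- (W * r) \<le> (\<Sum>i\<in>I. huber_deriv (- \<eta> i) * t i)"
    using sum_mult_matvec_lower_bound[OF W] r(1) by simp
  have "m / 640 \<le> real (card T)"
    using card_quadratic_rows_ge[OF _ r(2) op[of u] u large[OF u]] finI by (simp add: m_def T_def t_def G)
  then have "m / 640 * (r\<^sup>2 / 3200) \<le> (\<Sum>i\<in>T. r\<^sup>2 / 3200)" unfolding sum_constant by (intro mult_right_mono) auto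
  also have "\<dots> \<le> (\<Sum>i\<in>T. (t i)\<^sup>2 / 2)"
  proof (rule sum_mono)
    fix i assume "i \<in> T"
    then have "\<bar>1/40\<bar> \<le> \<bar>matvec J X u i\<bar>" by (simp add: T_def)
    then have "(1/40)\<^sup>2 \<le> (matvec J X u i)\<^sup>2" by (simp only: abs_le_square_iff)
    then have "r\<^sup>2 * (1/40)\<^sup>2 \<le> r\<^sup>2 * (matvec J X u i)\<^sup>2" by (intro mult_left_mono) auto
    then show "r\<^sup>2 / 3200 \<le> (t i)\<^sup>2 / 2"
      by (simp add: t_def power_mult_distrib power_divide)
  qed
  finally have quadratic: "m * r\<^sup>2 / 2048000 \<le> (\<Sum>i\<in>T. (t i)\<^sup>2 / 2)" by simp
  have "0 < r * (m * r / 2048000 - W)" using r(1) r(3) by (intro mult_pos_pos) (auto simp: m_def)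
  then have "0 < m * r\<^sup>2 / 2048000 - W * r" by (simp add: power2_eq_square algebra_simps)
  then show False using increment linear quadratic shrunk by linarith
qed

section \<open>The bad events\<close>

lemma sum_rows_matvec_eq:
  fixes a b :: "nat \<Rightarrow> real" and X :: "nat \<times> nat \<Rightarrow> real"
  shows "(\<Sum>i\<in>I. a i * matvec J X b i) = (\<Sum>k\<in>I \<times> J. (a (fst k) * b (snd k)) * X k)"
  by (simp add: sum.cartesian_product sum_distrib_left case_prod_unfold mult_ac)

lemma sets_std_gaussian_bilinear_ge:
  assumes "finite I" "finite J"
  shows "{X\<in>space (std_gaussian (I \<times> J)). s \<le> (\<Sum>i\<in>I. a i * matvec J X b i)} \<in> sets (std_gaussian (I \<times> J))"
  unfolding sum_rows_matvec_eq using assms by (intro sets_std_gaussian_linear_ge) simp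

lemma std_gaussian_bilinear_tail:
  fixes a b :: "nat \<Rightarrow> real"
  assumes fin: "finite I" "finite J" and S: "S > 0" "(\<Sum>i\<in>I. (a i)\<^sup>2) * (\<Sum>j\<in>J. (b j)\<^sup>2) \<le> S" and s: "s \<ge> 0"
  shows "measure (std_gaussian (I \<times> J)) {X\<in>space (std_gaussian (I \<times> J)). s \<le> (\<Sum>i\<in>I. a i * matvec J X b i)}
           \<le> exp (- s\<^sup>2 / (2 * S))"
proof -
  have "(\<Sum>k\<in>I \<times> J. (a (fst k) * b (snd k))\<^sup>2) = (\<Sum>i\<in>I. (a i)\<^sup>2) * (\<Sum>j\<in>J. (b j)\<^sup>2)"
    by (simp add: sum.cartesian_product sum_product power_mult_distrib case_prod_unfold)
  then show ?thesis
    unfolding sum_rows_matvec_eq using fin S s by (intro std_gaussian_linear_tail) simp_all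
qed

lemma measure_UN_le_exp:
  assumes fin: "finite N" and sets: "\<And>v. v \<in> N \<Longrightarrow> A v \<in> sets M"
    and each: "\<And>v. v \<in> N \<Longrightarrow> measure M (A v) \<le> exp (- x)" and card: "real (card N) \<le> exp c"
  shows "(\<Union>v\<in>N. A v) \<in> sets M" "measure M (\<Union>v\<in>N. A v) \<le> exp (c - x)"
proof -
  show "(\<Union>v\<in>N. A v) \<in> sets M" using fin sets by auto
  have "measure M (\<Union>v\<in>N. A v) \<le> (\<Sum>v\<in>N. measure M (A v))"
    by (rule measure_UNION_le[OF fin sets])
  also have "\<dots> \<le> real (card N) * exp (- x)"
    using sum_mono[of N "\<lambda>v. measure M (A v)" "\<lambda>_. exp (- x)"] each by simp
  also have "\<dots> \<le> exp c * exp (- x)" using card by (rule mult_right_mono) simp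
  finally show "measure M (\<Union>v\<in>N. A v) \<le> exp (c - x)" by (simp add: exp_diff exp_minus field_simps)
qed

definition bad_gradient_event :: "nat \<Rightarrow> nat \<Rightarrow> (nat \<Rightarrow> real) \<Rightarrow> real \<Rightarrow> (nat \<times> nat \<Rightarrow> real) set" where
  "bad_gradient_event n d \<psi> s = (\<Union>v\<in>grid_net {..<d} (1/2).
     {X\<in>space (std_gaussian ({..<n} \<times> {..<d})). s \<le> (\<Sum>i<n. \<psi> i * matvec {..<d} X v i)})"

definition bad_operator_event :: "nat \<Rightarrow> nat \<Rightarrow> nat set \<Rightarrow> real \<Rightarrow> (nat \<times> nat \<Rightarrow> real) set" where
  "bad_operator_event n d G s = (\<Union>(z, v)\<in>grid_net G (1/6) \<times> grid_net {..<d} (1/6).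
     {X\<in>space (std_gaussian ({..<n} \<times> {..<d})). s \<le> (\<Sum>i<n. z i * matvec {..<d} X v i)})"

definition bad_spread_event :: "nat \<Rightarrow> nat \<Rightarrow> nat set \<Rightarrow> real \<Rightarrow> (nat \<times> nat \<Rightarrow> real) set" where
  "bad_spread_event n d G e = (\<Union>v\<in>{v\<in>grid_net {..<d} e. 1/4 \<le> (\<Sum>j<d. (v j)\<^sup>2)}.
     {X\<in>space (std_gaussian ({..<n} \<times> {..<d})).
        (\<Sum>i\<in>G. if 1/20 \<le> \<bar>matvec {..<d} X v i\<bar> then 1 else 0) \<le> (1/40) * real (card G) / 4})"

lemma bad_gradient_event_measure:
  assumes n: "n \<ge> 1" and \<psi>: "\<And>i. \<bar>\<psi> i\<bar> \<le> 2" and s: "s \<ge> 0"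
  shows "bad_gradient_event n d \<psi> s \<in> sets (std_gaussian ({..<n} \<times> {..<d}))"
    and "measure (std_gaussian ({..<n} \<times> {..<d})) (bad_gradient_event n d \<psi> s)
           \<le> exp (real d * ln (grid_net_base (1/2)) - s\<^sup>2 / (32 * real n))"
proof -
  let ?M = "std_gaussian ({..<n} \<times> {..<d})"
  let ?A = "\<lambda>v. {X\<in>space ?M. s \<le> (\<Sum>i<n. \<psi> i * matvec {..<d} X v i)}"
  have "measure ?M (?A v) \<le> exp (- (s\<^sup>2 / (32 * real n)))" if v: "v \<in> grid_net {..<d} (1/2)" for v
  proof -
    have "(\<Sum>i<n. (\<psi> i)\<^sup>2) \<le> (\<Sum>i<n. 2\<^sup>2)"
    proof (rule sum_mono)
      fix i have "\<bar>\<psi> i\<bar>\<^sup>2 \<le> 2\<^sup>2" using \<psi>[of i] by (intro power_mono) auto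
      then show "(\<psi> i)\<^sup>2 \<le> 2\<^sup>2" by simp
    qed
    moreover have "(\<Sum>j<d. (v j)\<^sup>2) \<le> 4" using v by (simp add: grid_net_def)
    ultimately have "(\<Sum>i<n. (\<psi> i)\<^sup>2) * (\<Sum>j<d. (v j)\<^sup>2) \<le> 16 * real n"
      using mult_mono[of _ "4 * real n" _ 4] by (simp add: sum_nonneg)
    then show ?thesis
      using std_gaussian_bilinear_tail[of "{..<n}" "{..<d}" "16 * real n" \<psi> v s] n s by simp
  qed
  moreover have "?A v \<in> sets ?M" for v by (rule sets_std_gaussian_bilinear_ge) auto
  moreover note grid_net_card[of "{..<d}" "1/2"]
  ultimately show "bad_gradient_event n d \<psi> s \<in> sets ?M"
    and "measure ?M (bad_gradient_event n d \<psi> s) \<le> exp (real d * ln (grid_net_base (1/2)) - s\<^sup>2 / (32 * real n))"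
    using measure_UN_le_exp[of "grid_net {..<d} (1/2)" ?A ?M "s\<^sup>2 / (32 * real n)"]
    by (simp_all add: bad_gradient_event_def)
qed

lemma bad_operator_event_measure:
  assumes G: "G \<subseteq> {..<n}" and s: "s \<ge> 0"
  shows "bad_operator_event n d G s \<in> sets (std_gaussian ({..<n} \<times> {..<d}))"
    and "measure (std_gaussian ({..<n} \<times> {..<d})) (bad_operator_event n d G s)
           \<le> exp ((real (card G) + real d) * ln (grid_net_base (1/6)) - s\<^sup>2 / 32)"
proof -
  let ?M = "std_gaussian ({..<n} \<times> {..<d})"
  let ?N = "grid_net G (1/6) \<times> grid_net {..<d} (1/6)"
  let ?A = "\<lambda>(z, v). {X\<in>space ?M. s \<le> (\<Sum>i<n. z i * matvec {..<d} X v i)}"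
  have finG: "finite G" using G finite_subset by blast
  have "measure ?M (?A p) \<le> exp (- (s\<^sup>2 / 32))" if p: "p \<in> ?N" for p
  proof -
    obtain z v where zv: "p = (z, v)" "z \<in> grid_net G (1/6)" "v \<in> grid_net {..<d} (1/6)" using p by auto
    have "(\<Sum>i<n. (z i)\<^sup>2) = (\<Sum>i\<in>G. (z i)\<^sup>2)"
      by (rule sum.mono_neutral_right) (use G zv in \<open>auto simp: grid_net_def\<close>)
    then have "(\<Sum>i<n. (z i)\<^sup>2) * (\<Sum>j<d. (v j)\<^sup>2) \<le> 16"
      using zv mult_mono[of _ "4::real" _ 4] by (simp add: grid_net_def sum_nonneg)
    then show ?thesis
      using std_gaussian_bilinear_tail[of "{..<n}" "{..<d}" 16 z v s] s zv(1) by simp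
  qed
  moreover have "?A p \<in> sets ?M" for p
    by (cases p) (simp add: sets_std_gaussian_bilinear_ge)
  moreover have "real (card ?N) \<le> exp ((real (card G) + real d) * ln (grid_net_base (1/6)))"
  proof -
    have "real (card ?N) \<le> exp (real (card G) * ln (grid_net_base (1/6))) * exp (real d * ln (grid_net_base (1/6)))"
      using grid_net_card[OF finG, of "1/6"] grid_net_card[of "{..<d}" "1/6"]
      by (simp add: card_cartesian_product mult_mono)
    then show ?thesis by (simp add: exp_add[symmetric] algebra_simps)
  qed
  moreover have "finite ?N" using grid_net_card(1)[OF finG] grid_net_card(1)[of "{..<d}"] by simp
  ultimately show "bad_operator_event n d G s \<in> sets ?M"
    and "measure ?M (bad_operator_event n d G s) \<le> exp ((real (card G) + real d) * ln (grid_net_base (1/6)) - s\<^sup>2 / 32)"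
    using measure_UN_le_exp[of ?N ?A ?M "s\<^sup>2 / 32"] by (simp_all add: bad_operator_event_def)
qed

lemma bad_spread_event_measure:
  assumes G: "G \<subseteq> {..<n}" and n: "n \<ge> 1" and d: "d \<ge> 1" and e: "e > 0"
  shows "bad_spread_event n d G e \<in> sets (std_gaussian ({..<n} \<times> {..<d}))"
    and "measure (std_gaussian ({..<n} \<times> {..<d})) (bad_spread_event n d G e)
           \<le> exp (real d * ln (grid_net_base e) - real (card G) / 160)"
proof -
  let ?M = "std_gaussian ({..<n} \<times> {..<d})"
  let ?N = "{v\<in>grid_net {..<d} e. 1/4 \<le> (\<Sum>j<d. (v j)\<^sup>2)}"
  have ne: "{..<n} \<times> {..<d} \<noteq> {}" using n d by (auto simp: lessThan_empty_iff)
  have "{X\<in>space ?M. (\<Sum>i\<in>G. if 1/20 \<le> \<bar>matvec {..<d} X v i\<bar> then 1 else 0) \<le> (1/40) * real (card G) / 4} \<in> sets ?M"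
    for v
  proof -
    have [measurable]: "(\<lambda>X. matvec {..<d} X v i) \<in> borel_measurable ?M" if "i \<in> G" for i
      using that G by (intro borel_measurable_sum borel_measurable_times measurable_component_singleton) auto
    have "(\<lambda>X. \<Sum>i\<in>G. if 1/20 \<le> \<bar>matvec {..<d} X v i\<bar> then 1 else (0::real)) \<in> borel_measurable ?M"
      by (rule borel_measurable_sum) measurable
    then show ?thesis by measurable
  qed
  moreover have "measure ?M {X\<in>space ?M. (\<Sum>i\<in>G. if 1/20 \<le> \<bar>matvec {..<d} X v i\<bar> then 1 else 0)
      \<le> (1/40) * real (card G) / 4} \<le> exp (- ((1/40) * real (card G) / 4))" if v: "v \<in> ?N" for v
  proof (rule std_gaussian_few_rows_tail[OF _ _ ne G])
    fix i assume "i \<in> G"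
    then show "1/40 \<le> (\<integral>X. (if 1/20 \<le> \<bar>matvec {..<d} X v i\<bar> then 1 else (0::real)) \<partial>?M)"
      using G v by (intro row_anticoncentration) (auto simp: grid_net_def)
  qed auto
  moreover have "finite ?N" using grid_net_card(1)[of "{..<d}" e] e by simp
  moreover have "real (card ?N) \<le> exp (real d * ln (grid_net_base e))"
    using grid_net_card[of "{..<d}" e] e card_mono[of "grid_net {..<d} e" ?N] by force
  ultimately show "bad_spread_event n d G e \<in> sets ?M"
    and "measure ?M (bad_spread_event n d G e) \<le> exp (real d * ln (grid_net_base e) - real (card G) / 160)"
    using measure_UN_le_exp[of ?N _ ?M "real (card G) / 160"] by (simp_all add: bad_spread_event_def)
qed

lemma huber_loss_shift:
  "huber_loss n d X (\<lambda>i. matvec {..<d} X \<beta>s i + \<eta> i) \<beta>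
     = (\<Sum>i<n. huber (matvec {..<d} X (\<lambda>j. \<beta> j - \<beta>s j) i - \<eta> i)) / real n"
  unfolding huber_loss_def by (simp add: right_diff_distrib sum_subtractf algebra_simps)

lemma huber_error_le_off_bad_events:
  fixes X :: "nat \<times> nat \<Rightarrow> real" and \<eta> \<beta>s \<beta>h :: "nat \<Rightarrow> real"
  assumes n: "n \<ge> 1" and G: "G = {i\<in>{..<n}. \<bar>\<eta> i\<bar> \<le> 1}"
    and s: "s1 \<ge> 0" "s2 \<ge> 0" and e: "0 < e" "e \<le> 1/2" "1600 * (2 * s2)\<^sup>2 * e\<^sup>2 \<le> real (card G) / 320"
    and r: "r > 0" "(2 * s2)\<^sup>2 * r\<^sup>2 \<le> real (card G) / 640" "2048000 * (2 * s1) < real (card G) * r"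
    and X: "X \<in> space (std_gaussian ({..<n} \<times> {..<d}))"
    and good: "X \<notin> bad_gradient_event n d (\<lambda>i. huber_deriv (- \<eta> i)) s1"
      "X \<notin> bad_operator_event n d G s2" "X \<notin> bad_spread_event n d G e"
    and min: "\<And>\<beta>. huber_loss n d X (\<lambda>i. matvec {..<d} X \<beta>s i + \<eta> i) \<beta>h
                 \<le> huber_loss n d X (\<lambda>i. matvec {..<d} X \<beta>s i + \<eta> i) \<beta>"
  shows "(\<Sum>j<d. (\<beta>s j - \<beta>h j)\<^sup>2) \<le> r\<^sup>2"
proof -
  have finG: "finite G" by (simp add: G)
  have "(\<Sum>j<d. (\<Sum>i<n. huber_deriv (- \<eta> i) * X (i, j))\<^sup>2) \<le> (2 * s1)\<^sup>2"
  proof (rule sum_square_le_of_grid_net[OF _ s(1)])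
    fix v assume "v \<in> grid_net {..<d} (1/2)"
    then have "(\<Sum>i<n. huber_deriv (- \<eta> i) * matvec {..<d} X v i) < s1"
      using good(1) X by (auto simp: bad_gradient_event_def)
    moreover have "(\<Sum>i<n. huber_deriv (- \<eta> i) * matvec {..<d} X v i)
        = (\<Sum>j<d. (\<Sum>i<n. huber_deriv (- \<eta> i) * X (i, j)) * v j)"
      by (simp add: sum_distrib_left sum_distrib_right mult_ac) (rule sum.swap)
    ultimately show "(\<Sum>j<d. (\<Sum>i<n. huber_deriv (- \<eta> i) * X (i, j)) * v j) < s1" by simp
  qed simp
  moreover have op: "(\<Sum>i\<in>G. (matvec {..<d} X u i)\<^sup>2) \<le> (2 * s2)\<^sup>2 * (\<Sum>j<d. (u j)\<^sup>2)" for u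
  proof (rule matvec_norm_le_of_grid_net[OF finG _ s(2)])
    fix z v assume z: "z \<in> grid_net G (1/6)" and v: "v \<in> grid_net {..<d} (1/6)"
    have "(\<Sum>i<n. z i * matvec {..<d} X v i) = (\<Sum>i\<in>G. z i * matvec {..<d} X v i)"
      by (rule sum.mono_neutral_right) (use G z in \<open>auto simp: grid_net_def\<close>)
    then show "(\<Sum>i\<in>G. z i * matvec {..<d} X v i) < s2"
      using good(2) X z v unfolding bad_operator_event_def by force
  qed simp
  moreover have "real (card G) / 320 \<le> real (card {i\<in>G. 1/40 \<le> \<bar>matvec {..<d} X u i\<bar>})"
    if "(\<Sum>j<d. (u j)\<^sup>2) = 1" for u
  proof (rule many_large_rows_of_grid_net[OF finG _ _ op e(1,2) _ _ that])
    fix v assume "v \<in> grid_net {..<d} e" "1/4 \<le> (\<Sum>j<d. (v j)\<^sup>2)"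
    then show "real (card G) / 160 < real (card {i\<in>G. 1/20 \<le> \<bar>matvec {..<d} X v i\<bar>})"
      using good(3) X by (auto simp: bad_spread_event_def sum_indicator_eq_card[OF finG])
  qed (use e(3) in \<open>simp_all add: algebra_simps\<close>)
  moreover have "(\<Sum>i<n. huber (matvec {..<d} X (\<lambda>j. \<beta>h j - \<beta>s j) i - \<eta> i)) \<le> (\<Sum>i<n. huber (- \<eta> i))"
    using min[of \<beta>s] n unfolding huber_loss_shift by (simp add: divide_le_cancel)
  ultimately have "(\<Sum>j<d. (\<beta>h j - \<beta>s j)\<^sup>2) \<le> r\<^sup>2"
    using r s by (rule_tac huber_minimizer_error_le[OF _ G, where W="2 * s1" and K="(2 * s2)\<^sup>2"]) auto
  then show ?thesis by (simp add: power2_commute)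
qed

definition gradient_const :: real where
  "gradient_const = 32 * (ln (grid_net_base (1/2)) + 1)"

definition operator_const :: real where
  "operator_const = 256 * (ln (grid_net_base (1/6)) + 1)"

definition spread_mesh :: real where
  "spread_mesh = 1 / (1000 * sqrt operator_const)"

definition error_const :: real where
  "error_const = 8 * 2048000\<^sup>2 * gradient_const"

definition sample_const :: real where
  "sample_const = 640 * operator_const * error_const + 160 * (ln (grid_net_base spread_mesh) + 2) + 1"

lemma huber_constants:
  shows "0 < gradient_const" "256 \<le> operator_const" "0 < spread_mesh" "spread_mesh \<le> 1/2"
    and "spread_mesh\<^sup>2 * operator_const = 1 / 1000000" "0 < error_const"
    and "640 * operator_const * error_const \<le> sample_const"
    and "160 * (ln (grid_net_base spread_mesh) + 2) \<le> sample_const" "1 \<le> sample_const"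
proof -
  have base: "0 \<le> ln (grid_net_base e)" if "e \<noteq> 0" for e
    using grid_net_base_ge_one[OF that] by simp
  show "0 < gradient_const" "256 \<le> operator_const" "0 < error_const"
    using base[of "1/2"] base[of "1/6"] by (simp_all add: gradient_const_def operator_const_def error_const_def)
  then have "1 \<le> sqrt operator_const" by simp
  then show "0 < spread_mesh" "spread_mesh \<le> 1/2" by (auto simp: spread_mesh_def field_simps)
      (use \<open>1 \<le> sqrt operator_const\<close> in linarith)
  show "spread_mesh\<^sup>2 * operator_const = 1 / 1000000"
    using \<open>256 \<le> operator_const\<close> by (simp add: spread_mesh_def power_divide power_mult_distrib)
  show "640 * operator_const * error_const \<le> sample_const"
    and "160 * (ln (grid_net_base spread_mesh) + 2) \<le> sample_const" "1 \<le> sample_const"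
    using \<open>256 \<le> operator_const\<close> \<open>0 < error_const\<close> base[of spread_mesh] \<open>0 < spread_mesh\<close>
    by (simp_all add: sample_const_def)
qed

lemma bad_gradient_event_at_level:
  assumes n: "n \<ge> 1" and \<psi>: "\<And>i. \<bar>\<psi> i\<bar> \<le> 2" and L: "0 < L"
  shows "measure (std_gaussian ({..<n} \<times> {..<d}))
           (bad_gradient_event n d \<psi> (sqrt (gradient_const * real n * (real d + L)))) \<le> exp (- L)"
proof -
  define s where "s = sqrt (gradient_const * real n * (real d + L))"
  have "s\<^sup>2 = gradient_const * real n * (real d + L)"
    using huber_constants(1) L by (simp add: s_def)
  then have "real d * ln (grid_net_base (1/2)) - s\<^sup>2 / (32 * real n) = - real d - ln (grid_net_base (1/2)) * L - L"
    using n by (simp add: gradient_const_def field_simps)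
  also have "\<dots> \<le> - L"
  proof -
    have "0 \<le> ln (grid_net_base (1/2)) * L"
      using grid_net_base_ge_one[of "1/2"] L by (intro mult_nonneg_nonneg) auto
    then show ?thesis by linarith
  qed
  finally have "exp (real d * ln (grid_net_base (1/2)) - s\<^sup>2 / (32 * real n)) \<le> exp (- L)" by simp
  moreover have "0 \<le> s" using huber_constants(1) L by (simp add: s_def)
  ultimately show ?thesis
    using bad_gradient_event_measure(2)[where \<psi>=\<psi> and s=s and d=d, OF n \<psi>] unfolding s_def by linarith
qed

lemma bad_operator_event_at_level:
  assumes G: "G \<subseteq> {..<n}" and d: "d \<ge> 1" and L: "0 < L" "real d + L \<le> real (card G)"
  shows "measure (std_gaussian ({..<n} \<times> {..<d}))
           (bad_operator_event n d G (sqrt (operator_const * real (card G)) / 2)) \<le> exp (- L - ln 2)"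
proof -
  define m where "m = real (card G)"
  define s where "s = sqrt (operator_const * m) / 2"
  have "s\<^sup>2 = operator_const * m / 4"
    using huber_constants(2) by (simp add: s_def m_def power_divide)
  then have "(m + real d) * ln (grid_net_base (1/6)) - s\<^sup>2 / 32 = (real d - m) * ln (grid_net_base (1/6)) - 2 * m"
    by (simp add: operator_const_def field_simps)
  also have "\<dots> \<le> - L - ln 2"
  proof -
    have "(real d - m) * ln (grid_net_base (1/6)) \<le> 0"
      using grid_net_base_ge_one[of "1/6"] L by (intro mult_nonpos_nonneg) (auto simp: m_def)
    moreover have "ln (2::real) \<le> 1" using ln_le_minus_one[of "2::real"] by simp
    ultimately show ?thesis using L d by (simp add: m_def)
  qed
  finally have "exp ((m + real d) * ln (grid_net_base (1/6)) - s\<^sup>2 / 32) \<le> exp (- L - ln 2)" by simp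
  moreover have "0 \<le> s" using huber_constants(2) by (simp add: s_def m_def)
  ultimately show ?thesis
    using bad_operator_event_measure(2)[OF G, of s d] unfolding s_def m_def by linarith
qed

lemma bad_spread_event_at_level:
  assumes G: "G \<subseteq> {..<n}" and n: "n \<ge> 1" and d: "d \<ge> 1" and L: "ln 2 \<le> L"
    and m: "sample_const * (real d + L) \<le> real (card G)"
  shows "measure (std_gaussian ({..<n} \<times> {..<d})) (bad_spread_event n d G spread_mesh) \<le> exp (- L - ln 2)"
proof -
  have "0 < L" using L ln_gt_zero[of "2::real"] by linarith
  then have "160 * (ln (grid_net_base spread_mesh) + 2) * (real d + L) \<le> sample_const * (real d + L)"
    using huber_constants(8) by (intro mult_right_mono) auto
  also have "\<dots> \<le> real (card G)" by (rule m)
  finally have "160 * (ln (grid_net_base spread_mesh) + 2) * (real d + L) \<le> real (card G)" .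
  moreover have "0 \<le> ln (grid_net_base spread_mesh) * L"
    using grid_net_base_ge_one[of spread_mesh] huber_constants(3) \<open>0 < L\<close> by (intro mult_nonneg_nonneg) auto
  ultimately have "real d * ln (grid_net_base spread_mesh) - real (card G) / 160 \<le> - L - ln 2"
    using L by (simp add: algebra_simps)
  then show ?thesis
    using bad_spread_event_measure(2)[OF G n d huber_constants(3)] by (meson exp_le_cancel_iff order.trans)
qed

definition bad_design :: "nat \<Rightarrow> nat \<Rightarrow> (nat \<Rightarrow> real) \<Rightarrow> real \<Rightarrow> (nat \<times> nat \<Rightarrow> real) set" where
  "bad_design n d \<eta> \<delta> =
     bad_gradient_event n d (\<lambda>i. huber_deriv (- \<eta> i)) (sqrt (gradient_const * real n * (real d + ln (2 / \<delta>))))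
     \<union> bad_operator_event n d {i\<in>{..<n}. \<bar>\<eta> i\<bar> \<le> 1} (sqrt (operator_const * real (card {i\<in>{..<n}. \<bar>\<eta> i\<bar> \<le> 1})) / 2)
     \<union> bad_spread_event n d {i\<in>{..<n}. \<bar>\<eta> i\<bar> \<le> 1} spread_mesh"

lemma bad_design_measure_le:
  assumes n: "n \<ge> 1" and d: "d \<ge> 1" and \<delta>: "0 < \<delta>" "\<delta> < 1"
    and m: "sample_const * (real d + ln (2 / \<delta>)) \<le> real (card {i\<in>{..<n}. \<bar>\<eta> i\<bar> \<le> 1})"
  shows "bad_design n d \<eta> \<delta> \<in> sets (std_gaussian ({..<n} \<times> {..<d}))"
    and "measure (std_gaussian ({..<n} \<times> {..<d})) (bad_design n d \<eta> \<delta>) \<le> \<delta>"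
proof -
  let ?M = "std_gaussian ({..<n} \<times> {..<d})"
  define G where "G = {i\<in>{..<n}. \<bar>\<eta> i\<bar> \<le> 1}"
  define L where "L = ln (2 / \<delta>)"
  define B1 where "B1 = bad_gradient_event n d (\<lambda>i. huber_deriv (- \<eta> i)) (sqrt (gradient_const * real n * (real d + L)))"
  define B2 where "B2 = bad_operator_event n d G (sqrt (operator_const * real (card G)) / 2)"
  define B3 where "B3 = bad_spread_event n d G spread_mesh"
  have G: "G \<subseteq> {..<n}" by (auto simp: G_def)
  have L: "ln 2 \<le> L" "0 < L" "exp (- L) = \<delta> / 2" "exp (- L - ln 2) = \<delta> / 4"
    using \<delta> ln_gt_zero[of "2::real"] by (simp_all add: L_def field_simps exp_diff exp_minus)
  have "real d + L \<le> sample_const * (real d + L)"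
    using huber_constants(9) L by (simp add: mult_le_cancel_right1)
  with m have dLm: "real d + L \<le> real (card G)" by (simp add: G_def L_def)
  have "B1 \<in> sets ?M" "B2 \<in> sets ?M" "B3 \<in> sets ?M"
    using bad_gradient_event_measure(1)[OF n abs_huber_deriv_le] bad_operator_event_measure(1)[OF G]
      bad_spread_event_measure(1)[OF G n d huber_constants(3)] huber_constants(1,2) L(2)
    by (simp_all add: B1_def B2_def B3_def)
  moreover have "bad_design n d \<eta> \<delta> = B1 \<union> B2 \<union> B3"
    by (simp add: bad_design_def B1_def B2_def B3_def G_def L_def)
  ultimately have "bad_design n d \<eta> \<delta> \<in> sets ?M"
    and union: "measure ?M (bad_design n d \<eta> \<delta>) \<le> measure ?M B1 + measure ?M B2 + measure ?M B3"
    by (auto intro!: order.trans[OF measure_Un_le] add_right_mono measure_Un_le)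
  then show "bad_design n d \<eta> \<delta> \<in> sets ?M" by simp
  have "measure ?M B1 \<le> exp (- L)" "measure ?M B2 \<le> exp (- L - ln 2)" "measure ?M B3 \<le> exp (- L - ln 2)"
    using bad_gradient_event_at_level[OF n abs_huber_deriv_le L(2), of d]
      bad_operator_event_at_level[OF G d L(2) dLm] bad_spread_event_at_level[OF G n d L(1)] m
    by (simp_all add: B1_def B2_def B3_def G_def L_def)
  then show "measure ?M (bad_design n d \<eta> \<delta>) \<le> \<delta>" using union L by linarith
qed

lemma huber_levels_admissible:
  assumes n: "n \<ge> 1" and \<alpha>: "0 < \<alpha>" and L: "0 < L" and m: "\<alpha> * real n \<le> m"
    and sample: "sample_const * (real d + L) \<le> \<alpha>\<^sup>2 * real n"
  defines "s1 \<equiv> sqrt (gradient_const * real n * (real d + L))"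
    and "s2 \<equiv> sqrt (operator_const * m) / 2"
    and "r \<equiv> sqrt (error_const * (real d + L) / (\<alpha>\<^sup>2 * real n))"
  shows "(2 * s2)\<^sup>2 * r\<^sup>2 \<le> m / 640" and "1600 * (2 * s2)\<^sup>2 * spread_mesh\<^sup>2 \<le> m / 320"
    and "2048000 * (2 * s1) < m * r"
proof -
  note const = huber_constants
  have "0 \<le> \<alpha> * real n" using \<alpha> by simp
  then have m0: "0 \<le> m" using m by linarith
  have s2: "(2 * s2)\<^sup>2 = operator_const * m"
    using const(2) m0 by (simp add: s2_def power_mult_distrib)
  have r: "0 < r" "r\<^sup>2 = error_const * (real d + L) / (\<alpha>\<^sup>2 * real n)"
    using const(6) L \<alpha> n by (simp_all add: r_def)
  have "r\<^sup>2 \<le> error_const * (real d + L) / (sample_const * (real d + L))"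
    unfolding r(2) using sample const L \<alpha> n by (intro divide_left_mono mult_pos_pos) auto
  also have "\<dots> = error_const / sample_const"
    using L by (simp add: add_pos_nonneg)
  also have "\<dots> \<le> 1 / (640 * operator_const)"
    using const(2,6,7,9) by (simp add: field_simps)
  finally have "operator_const * r\<^sup>2 \<le> 1 / 640" using const(2) by (simp add: field_simps)
  then have "m * (operator_const * r\<^sup>2) \<le> m * (1 / 640)" using m0 by (intro mult_left_mono) auto
  then show "(2 * s2)\<^sup>2 * r\<^sup>2 \<le> m / 640" unfolding s2 by (simp add: algebra_simps)
  have "1600 * (2 * s2)\<^sup>2 * spread_mesh\<^sup>2 = 1600 * m * (spread_mesh\<^sup>2 * operator_const)"
    unfolding s2 by (simp add: algebra_simps)
  also have "\<dots> = m / 625" by (simp add: const(5))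
  finally show "1600 * (2 * s2)\<^sup>2 * spread_mesh\<^sup>2 \<le> m / 320" using m0 by simp
  have "(2048000 * (2 * s1))\<^sup>2 < error_const * (real n * (real d + L))"
    using const(1) n L by (simp add: s1_def error_const_def power_mult_distrib)
  also have "\<dots> = (\<alpha> * real n)\<^sup>2 * r\<^sup>2"
    unfolding r(2) using \<alpha> n by (simp add: power2_eq_square field_simps)
  also have "\<dots> \<le> (m * r)\<^sup>2"
    using power_mono[OF m, of 2] \<alpha> by (simp add: power_mult_distrib mult_right_mono)
  finally show "2048000 * (2 * s1) < m * r"
    by (rule power_less_imp_less_base) (use r(1) m0 in simp)
qed

lemma huber_error_le_off_bad_design:
  fixes X :: "nat \<times> nat \<Rightarrow> real" and \<eta> \<beta>s \<beta>h :: "nat \<Rightarrow> real"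
  assumes n: "n \<ge> 1" and \<alpha>: "0 < \<alpha>" and \<delta>: "0 < \<delta>" "\<delta> < 1"
    and inliers: "\<alpha> * real n \<le> real (card {i\<in>{..<n}. \<bar>\<eta> i\<bar> \<le> 1})"
    and sample: "sample_const * (real d + ln (2 / \<delta>)) \<le> \<alpha>\<^sup>2 * real n"
    and X: "X \<in> space (std_gaussian ({..<n} \<times> {..<d})) - bad_design n d \<eta> \<delta>"
    and min: "\<And>\<beta>. huber_loss n d X (\<lambda>i. matvec {..<d} X \<beta>s i + \<eta> i) \<beta>h
                 \<le> huber_loss n d X (\<lambda>i. matvec {..<d} X \<beta>s i + \<eta> i) \<beta>"
  shows "(\<Sum>j<d. (\<beta>s j - \<beta>h j)\<^sup>2) \<le> error_const * (real d + ln (2 / \<delta>)) / (\<alpha>\<^sup>2 * real n)"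
proof -
  define G where "G = {i\<in>{..<n}. \<bar>\<eta> i\<bar> \<le> 1}"
  define L where "L = ln (2 / \<delta>)"
  define s1 where "s1 = sqrt (gradient_const * real n * (real d + L))"
  define s2 where "s2 = sqrt (operator_const * real (card G)) / 2"
  define r where "r = sqrt (error_const * (real d + L) / (\<alpha>\<^sup>2 * real n))"
  have L: "0 < L" using \<delta> by (simp add: L_def)
  note levels = huber_levels_admissible[OF n \<alpha> L inliers[folded G_def] sample[folded L_def],
      folded s1_def s2_def r_def]
  have s: "0 \<le> s1" "0 \<le> s2" "0 < r"
    using huber_constants(1,2,6) L \<alpha> n by (simp_all add: s1_def s2_def r_def)
  have "X \<in> space (std_gaussian ({..<n} \<times> {..<d}))"
    and "X \<notin> bad_gradient_event n d (\<lambda>i. huber_deriv (- \<eta> i)) s1"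
    and "X \<notin> bad_operator_event n d G s2" and "X \<notin> bad_spread_event n d G spread_mesh"
    using X by (simp_all add: bad_design_def G_def s1_def s2_def L_def)
  from huber_error_le_off_bad_events[OF n G_def s(1,2) huber_constants(3,4) levels(2) s(3) levels(1,3) this min]
  have "(\<Sum>j<d. (\<beta>s j - \<beta>h j)\<^sup>2) \<le> r\<^sup>2" .
  then show ?thesis using L \<alpha> n huber_constants(6) by (simp add: r_def L_def)
qed

lemma huber_regression_whp:
  assumes n: "n \<ge> 1" and d: "d \<ge> 1" and \<alpha>: "0 < \<alpha>" "\<alpha> \<le> 1"
    and inliers: "real (card {i\<in>{..<n}. \<bar>\<eta> i\<bar> \<le> 1}) \<ge> \<alpha> * real n"
    and \<delta>: "0 < \<delta>" "\<delta> < 1" and sample: "real n \<ge> sample_const * (real d + ln (2 / \<delta>)) / \<alpha>\<^sup>2"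
  shows "\<exists>A \<in> sets (gauss_matrix n d).
           measure (gauss_matrix n d) A \<ge> 1 - \<delta> \<and>
           (\<forall>X\<in>A. \<forall>\<beta>s::nat \<Rightarrow> real. \<forall>\<beta>h::nat \<Rightarrow> real.
              (let y = (\<lambda>i. (\<Sum>j<d. X (i, j) * \<beta>s j) + \<eta> i) in
                (\<forall>\<beta>. huber_loss n d X y \<beta>h \<le> huber_loss n d X y \<beta>) \<longrightarrow>
                (\<Sum>j<d. (\<beta>s j - \<beta>h j)\<^sup>2) \<le> error_const * (real d + ln (2 / \<delta>)) / (\<alpha>\<^sup>2 * real n)))"
proof -
  let ?M = "std_gaussian ({..<n} \<times> {..<d})"
  have sample': "sample_const * (real d + ln (2 / \<delta>)) \<le> \<alpha>\<^sup>2 * real n"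
    using sample \<alpha> by (simp add: field_simps)
  moreover have "\<alpha>\<^sup>2 * real n \<le> \<alpha> * real n"
    using \<alpha> by (intro mult_right_mono) (auto simp: power2_eq_square mult_left_le_one_le)
  ultimately have "sample_const * (real d + ln (2 / \<delta>)) \<le> real (card {i\<in>{..<n}. \<bar>\<eta> i\<bar> \<le> 1})"
    using inliers by linarith
  note bad = bad_design_measure_le[OF n d \<delta> this]
  show ?thesis
    unfolding gauss_matrix_def Let_def
  proof (intro bexI[of _ "space ?M - bad_design n d \<eta> \<delta>"] conjI ballI allI impI)
    show "1 - \<delta> \<le> measure ?M (space ?M - bad_design n d \<eta> \<delta>)"
      using prob_space.prob_compl[OF prob_space_std_gaussian bad(1)] bad(2) by simp
  qed (use bad(1) huber_error_le_off_bad_design[OF n \<alpha>(1) \<delta> inliers sample'] in auto)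
qed

theorem mainTheorem1:
  shows "\<exists>C C'. C > 0 \<and> C' > 0 \<and>
    (\<forall>(n::nat) (d::nat) (\<alpha>::real) (\<eta>::nat \<Rightarrow> real) (\<delta>::real).
      n \<ge> 1 \<longrightarrow> d \<ge> 1 \<longrightarrow> 0 < \<alpha> \<longrightarrow> \<alpha> \<le> 1 \<longrightarrow>
      real (card {i\<in>{..<n}. \<bar>\<eta> i\<bar> \<le> 1}) \<ge> \<alpha> * real n \<longrightarrow>
      0 < \<delta> \<longrightarrow> \<delta> < 1 \<longrightarrow>
      real n \<ge> C * (real d + ln (2 / \<delta>)) / \<alpha>\<^sup>2 \<longrightarrow>
      (\<exists>A \<in> sets (gauss_matrix n d).
         measure (gauss_matrix n d) A \<ge> 1 - \<delta> \<and>
         (\<forall>X\<in>A. \<forall>\<beta>s::nat \<Rightarrow> real. \<forall>\<beta>h::nat \<Rightarrow> real.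
            (let y = (\<lambda>i. (\<Sum>j<d. X (i, j) * \<beta>s j) + \<eta> i) in
              (\<forall>\<beta>. huber_loss n d X y \<beta>h \<le> huber_loss n d X y \<beta>) \<longrightarrow>
              (\<Sum>j<d. (\<beta>s j - \<beta>h j)\<^sup>2) \<le> C' * (real d + ln (2 / \<delta>)) / (\<alpha>\<^sup>2 * real n)))))"
proof (rule exI[of _ sample_const], rule exI[of _ error_const], intro conjI allI impI)
  show "0 < sample_const" "0 < error_const" using huber_constants(6,9) by simp_all
qed (rule huber_regression_whp; assumption)

end
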